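(* Let $k$ be a field, $\sigma$ an automorphism of $k$, and $\delta$ a $\sigma$-derivation of $k$. Then: (1) the skew series field $k((t,\sigma))$ is a regular extension of $k$; (2) the skew series field $k_{\sigma,\delta}((z))$ is a regular extension of $k$; (3) the skew rational fraction field $k(t,\sigma,\delta)$ is a regular extension of $k$.
   Context: Fields are not assumed commutative. An element $x$ of a field extension $h/k$ is algebraic over $k$ if the subfield $k(x)\subset h$ it generates has finite dimension both as a left and as a right $k$-vector space. A field extension $K/k$ is called regular if every element of $K$ algebraic over $k$ belongs to $k$. Consequently, if $k\subset L\subset K$ are fields and $K/k$ is regular, then $L/k$ is regular. The skew series field with right-hand coefficients $k_{\sigma,\delta}((z))$ consists of formal series $S=\sum_{i\ge n} z^i s_i$ ($n\in\mathbb{Z}$, $s_i\in k$), with left multiplication by $a\in k$ determined by $az=\sum_{i\ge 1} z^i\,\sigma\circ\delta^{i-1}(a)$. The skew series field $k((t,\sigma))$ consists of formal series $S=\sum_{i\ge n} s_i t^i$ ($n\in\mathbb{Z}$, $s_i\in k$) with $ta=\sigma(a)t$ for $a\in k$. $k(t,\sigma,\delta)$ denotes the skew field of fractions of the Ore polynomial ring $k[t,\sigma,\delta]$. There are $k$-embeddings $k(t,\sigma,\delta)\to k_{\sigma,\delta}((z))$, $t\mapsto z^{-1}$, and $k(t,\sigma)\to k((t,\sigma))$, $t\mapsto t$. *)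

theory Defs
  imports "HOL-Algebra.Ring" "HOL-Algebra.RingHom"
begin

definition ring_automorphism :: "('a::division_ring \<Rightarrow> 'a) \<Rightarrow> bool" where
  "ring_automorphism \<sigma> \<longleftrightarrow> bij \<sigma> \<and> (\<forall>a b. \<sigma> (a + b) = \<sigma> a + \<sigma> b)
     \<and> (\<forall>a b. \<sigma> (a * b) = \<sigma> a * \<sigma> b) \<and> \<sigma> 1 = 1"

definition sigma_derivation :: "('a::division_ring \<Rightarrow> 'a) \<Rightarrow> ('a \<Rightarrow> 'a) \<Rightarrow> bool" where
  "sigma_derivation \<sigma> \<delta> \<longleftrightarrow> (\<forall>a b. \<delta> (a + b) = \<delta> a + \<delta> b)
     \<and> (\<forall>a b. \<delta> (a * b) = \<sigma> a * \<delta> b + \<delta> a * b)"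

definition spow :: "('a \<Rightarrow> 'a) \<Rightarrow> int \<Rightarrow> 'a \<Rightarrow> 'a" where
  "spow \<sigma> i = (if 0 \<le> i then \<sigma> ^^ nat i else inv_into UNIV \<sigma> ^^ nat (- i))"

inductive_set gen_subfield :: "'b ring \<Rightarrow> ('a \<Rightarrow> 'b) \<Rightarrow> 'b \<Rightarrow> 'b set"
  for H :: "'b ring" and \<iota> :: "'a \<Rightarrow> 'b" and x :: 'b where
  base: "\<iota> a \<in> gen_subfield H \<iota> x"
| gen: "x \<in> gen_subfield H \<iota> x"
| add: "u \<in> gen_subfield H \<iota> x \<Longrightarrow> v \<in> gen_subfield H \<iota> x \<Longrightarrow> u \<oplus>\<^bsub>H\<^esub> v \<in> gen_subfield H \<iota> x"
| neg: "u \<in> gen_subfield H \<iota> x \<Longrightarrow> \<ominus>\<^bsub>H\<^esub> u \<in> gen_subfield H \<iota> x"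
| mult: "u \<in> gen_subfield H \<iota> x \<Longrightarrow> v \<in> gen_subfield H \<iota> x \<Longrightarrow> u \<otimes>\<^bsub>H\<^esub> v \<in> gen_subfield H \<iota> x"
| inv: "u \<in> gen_subfield H \<iota> x \<Longrightarrow> u \<in> Units H \<Longrightarrow> inv\<^bsub>H\<^esub> u \<in> gen_subfield H \<iota> x"

definition fin_dim_left :: "'b ring \<Rightarrow> ('a \<Rightarrow> 'b) \<Rightarrow> 'b set \<Rightarrow> bool" where
  "fin_dim_left H \<iota> V \<longleftrightarrow> (\<exists>S. finite S \<and> S \<subseteq> V \<and>
     (\<forall>y\<in>V. \<exists>c. y = (\<Oplus>\<^bsub>H\<^esub> s\<in>S. \<iota> (c s) \<otimes>\<^bsub>H\<^esub> s)))"

definition fin_dim_right :: "'b ring \<Rightarrow> ('a \<Rightarrow> 'b) \<Rightarrow> 'b set \<Rightarrow> bool" where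
  "fin_dim_right H \<iota> V \<longleftrightarrow> (\<exists>S. finite S \<and> S \<subseteq> V \<and>
     (\<forall>y\<in>V. \<exists>c. y = (\<Oplus>\<^bsub>H\<^esub> s\<in>S. s \<otimes>\<^bsub>H\<^esub> \<iota> (c s))))"

definition algebraic_over :: "'b ring \<Rightarrow> ('a \<Rightarrow> 'b) \<Rightarrow> 'b \<Rightarrow> bool" where
  "algebraic_over H \<iota> x \<longleftrightarrow>
     fin_dim_left H \<iota> (gen_subfield H \<iota> x) \<and> fin_dim_right H \<iota> (gen_subfield H \<iota> x)"

definition regular_ext :: "'b ring \<Rightarrow> ('a \<Rightarrow> 'b) \<Rightarrow> bool" where
  "regular_ext H \<iota> \<longleftrightarrow> (\<forall>x\<in>carrier H. algebraic_over H \<iota> x \<longrightarrow> x \<in> range \<iota>)"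

section \<open>Skew Laurent series k((t,sigma)), left coefficients, t a = sigma(a) t\<close>

definition laurent_carrier :: "(int \<Rightarrow> 'a::zero) set" where
  "laurent_carrier = {f. \<exists>n. \<forall>i<n. f i = 0}"

definition skew_series_t :: "('a::division_ring \<Rightarrow> 'a) \<Rightarrow> (int \<Rightarrow> 'a) ring" where
  "skew_series_t \<sigma> = \<lparr>carrier = laurent_carrier,
     mult = (\<lambda>f g m. \<Sum>i | f i \<noteq> 0 \<and> g (m - i) \<noteq> 0. f i * spow \<sigma> i (g (m - i))),
     one = (\<lambda>i. if i = 0 then 1 else 0),
     zero = (\<lambda>i. 0),
     add = (\<lambda>f g i. f i + g i)\<rparr>"

definition const_series :: "'a::zero \<Rightarrow> int \<Rightarrow> 'a" where
  "const_series a = (\<lambda>i. if i = 0 then a else 0)"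

section \<open>Skew Laurent series k_{sigma,delta}((z)), right coefficients,
  a z = sum_{i>=1} z^i sigma(delta^(i-1)(a))\<close>

text \<open>zpos n a l: coefficient of z^l in a z^n written as sum z^l c_l (right coefficients).\<close>
primrec zpos :: "('a::division_ring \<Rightarrow> 'a) \<Rightarrow> ('a \<Rightarrow> 'a) \<Rightarrow> nat \<Rightarrow> 'a \<Rightarrow> int \<Rightarrow> 'a" where
  "zpos \<sigma> \<delta> 0 a = (\<lambda>l. if l = 0 then a else 0)"
| "zpos \<sigma> \<delta> (Suc n) a = (\<lambda>p. \<Sum>i\<in>{1..nat (p - int n)}.
      \<sigma> ((\<delta> ^^ (i - 1)) (zpos \<sigma> \<delta> n a (p - int i))))"

text \<open>zneg n a l: coefficient of z^l in a z^(-n); uses a z^(-1) = z^(-1) sigma^(-1)(a) - delta(sigma^(-1)(a)).\<close>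
primrec zneg :: "('a::division_ring \<Rightarrow> 'a) \<Rightarrow> ('a \<Rightarrow> 'a) \<Rightarrow> nat \<Rightarrow> 'a \<Rightarrow> int \<Rightarrow> 'a" where
  "zneg \<sigma> \<delta> 0 a = (\<lambda>l. if l = 0 then a else 0)"
| "zneg \<sigma> \<delta> (Suc n) a = (\<lambda>p. inv_into UNIV \<sigma> (zneg \<sigma> \<delta> n a (p + 1)) - \<delta> (inv_into UNIV \<sigma> (zneg \<sigma> \<delta> n a p)))"

definition zcoeff :: "('a::division_ring \<Rightarrow> 'a) \<Rightarrow> ('a \<Rightarrow> 'a) \<Rightarrow> 'a \<Rightarrow> int \<Rightarrow> int \<Rightarrow> 'a" where
  "zcoeff \<sigma> \<delta> a j = (if 0 \<le> j then zpos \<sigma> \<delta> (nat j) a else zneg \<sigma> \<delta> (nat (- j)) a)"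

text \<open>(sum_i z^i s_i)(sum_j z^j r_j) = sum_{i,j} z^i (s_i z^j) r_j.\<close>
definition skew_series_z :: "('a::division_ring \<Rightarrow> 'a) \<Rightarrow> ('a \<Rightarrow> 'a) \<Rightarrow> (int \<Rightarrow> 'a) ring" where
  "skew_series_z \<sigma> \<delta> = \<lparr>carrier = laurent_carrier,
     mult = (\<lambda>s r m. \<Sum>p\<in>{(i, j). s i \<noteq> 0 \<and> r j \<noteq> 0 \<and> i + j \<le> m}.
                zcoeff \<sigma> \<delta> (s (fst p)) (snd p) (m - fst p) * r (snd p)),
     one = (\<lambda>i. if i = 0 then 1 else 0),
     zero = (\<lambda>i. 0),
     add = (\<lambda>f g i. f i + g i)\<rparr>"

section \<open>Ore polynomial ring k[t,sigma,delta], left coefficients, t a = sigma(a) t + delta(a)\<close>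

text \<open>tcoeff i b l: coefficient of t^l in t^i b.\<close>
primrec tcoeff :: "('a::division_ring \<Rightarrow> 'a) \<Rightarrow> ('a \<Rightarrow> 'a) \<Rightarrow> nat \<Rightarrow> 'a \<Rightarrow> nat \<Rightarrow> 'a" where
  "tcoeff \<sigma> \<delta> 0 b = (\<lambda>l. if l = 0 then b else 0)"
| "tcoeff \<sigma> \<delta> (Suc i) b = (\<lambda>l. (if 1 \<le> l then \<sigma> (tcoeff \<sigma> \<delta> i b (l - 1)) else 0)
                                 + \<delta> (tcoeff \<sigma> \<delta> i b l))"

definition ore_poly :: "('a::division_ring \<Rightarrow> 'a) \<Rightarrow> ('a \<Rightarrow> 'a) \<Rightarrow> (nat \<Rightarrow> 'a) ring" where
  "ore_poly \<sigma> \<delta> = \<lparr>carrier = {f. finite {i. f i \<noteq> 0}},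
     mult = (\<lambda>f g m. \<Sum>p\<in>{(i, j). f i \<noteq> 0 \<and> g j \<noteq> 0 \<and> j \<le> m}.
                f (fst p) * tcoeff \<sigma> \<delta> (fst p) (g (snd p)) (m - snd p)),
     one = (\<lambda>i. if i = 0 then 1 else 0),
     zero = (\<lambda>i. 0),
     add = (\<lambda>f g i. f i + g i)\<rparr>"

definition const_poly :: "'a::zero \<Rightarrow> nat \<Rightarrow> 'a" where
  "const_poly a = (\<lambda>i. if i = 0 then a else 0)"

definition division_ring_alg :: "'b ring \<Rightarrow> bool" where
  "division_ring_alg D \<longleftrightarrow> ring D \<and> \<one>\<^bsub>D\<^esub> \<noteq> \<zero>\<^bsub>D\<^esub>
     \<and> (\<forall>x\<in>carrier D. x \<noteq> \<zero>\<^bsub>D\<^esub> \<longrightarrow> x \<in> Units D)"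

definition is_skew_fraction_field :: "('a::division_ring \<Rightarrow> 'a) \<Rightarrow> ('a \<Rightarrow> 'a) \<Rightarrow> 'b ring \<Rightarrow> ((nat \<Rightarrow> 'a) \<Rightarrow> 'b) \<Rightarrow> bool" where
  "is_skew_fraction_field \<sigma> \<delta> D \<phi> \<longleftrightarrow> division_ring_alg D
     \<and> \<phi> \<in> ring_hom (ore_poly \<sigma> \<delta>) D \<and> inj_on \<phi> (carrier (ore_poly \<sigma> \<delta>))
     \<and> (\<forall>x\<in>carrier D. \<exists>p\<in>carrier (ore_poly \<sigma> \<delta>). \<exists>q\<in>carrier (ore_poly \<sigma> \<delta>).
           q \<noteq> \<zero>\<^bsub>ore_poly \<sigma> \<delta>\<^esub> \<and> x = \<phi> p \<otimes>\<^bsub>D\<^esub> inv\<^bsub>D\<^esub> (\<phi> q))"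

end

(* Each of the three fields carries a valuation v into the integers with v (x * y) = v x + v y,
   v (x - y) \<in> {v x, v y} whenever v x \<noteq> v y, and v (c x) = v x for nonzero scalars c of k:
   the order of a Laurent series, and deg p - deg q on a fraction p q^-1 (well defined thanks to
   the Ore condition, which the field of fractions itself provides).
   In a k-space spanned by n elements the nonzero elements take at most n values: adjoining a
   generator s creates at most one new value, since two new values would be taken by s + z1 and
   s + z2, and then z1 - z2, an old element, would take one of them.
   If x is not in k, then k(x) contains some y \<noteq> 0 with v y \<noteq> 0 (x itself, or x minus its
   leading constant), and the powers of y take the infinitely many values n v y.  Hence k(x)
   has infinite dimension. *)

theory Submission
  imports Defs
begin

lemma ring_automorphism_simps:
  fixes \<tau> :: "'a::division_ring \<Rightarrow> 'a"
  assumes "ring_automorphism \<tau>"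
  shows "\<tau> 0 = 0" "\<tau> (a - b) = \<tau> a - \<tau> b" "\<tau> a = 0 \<longleftrightarrow> a = 0"
proof -
  have add: "\<And>a b. \<tau> (a + b) = \<tau> a + \<tau> b" and "inj \<tau>"
    using assms unfolding ring_automorphism_def bij_def by blast+
  show zero: "\<tau> 0 = 0" using add[of 0 0] by simp
  show "\<tau> (a - b) = \<tau> a - \<tau> b" using add[of "a - b" b] by (simp add: eq_diff_eq)
  show "\<tau> a = 0 \<longleftrightarrow> a = 0" using \<open>inj \<tau>\<close> zero by (metis injD)
qed

lemma ring_automorphism_inv:
  fixes \<tau> :: "'a::division_ring \<Rightarrow> 'a"
  assumes "ring_automorphism \<tau>"
  shows "ring_automorphism (inv_into UNIV \<tau>)"
proof -
  have "bij \<tau>" and add: "\<And>a b. \<tau> (a + b) = \<tau> a + \<tau> b" and mult: "\<And>a b. \<tau> (a * b) = \<tau> a * \<tau> b"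
    and "\<tau> 1 = 1"
    using assms unfolding ring_automorphism_def by blast+
  then have inv_f: "\<And>x. inv_into UNIV \<tau> (\<tau> x) = x" and f_inv: "\<And>x. \<tau> (inv_into UNIV \<tau> x) = x"
    by (simp_all add: bij_is_inj bij_is_surj surj_f_inv_f)
  show ?thesis
    unfolding ring_automorphism_def
    using bij_imp_bij_inv[OF \<open>bij \<tau>\<close>] \<open>\<tau> 1 = 1\<close> by (metis inv_f f_inv add mult)
qed

lemma ring_automorphism_funpow:
  assumes "ring_automorphism \<tau>"
  shows "ring_automorphism (\<tau> ^^ n)"
proof (induction n)
  case 0
  show ?case by (simp add: ring_automorphism_def bij_id[unfolded id_def])
next
  case (Suc n)
  then show ?case
    using assms bij_comp[of "\<tau> ^^ n" \<tau>] unfolding ring_automorphism_def by simp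
qed

lemma ring_automorphism_spow:
  assumes "ring_automorphism \<sigma>"
  shows "ring_automorphism (spow \<sigma> i)"
  unfolding spow_def
  using ring_automorphism_funpow[OF assms] ring_automorphism_funpow[OF ring_automorphism_inv[OF assms]]
  by simp

section \<open>Spans and values\<close>

definition span_by :: "('b, 'm) ring_scheme \<Rightarrow> ('a \<Rightarrow> 'b \<Rightarrow> 'b) \<Rightarrow> 'b set \<Rightarrow> 'b set" where
  "span_by G act S = range (\<lambda>c. \<Oplus>\<^bsub>G\<^esub>s\<in>S. act (c s) s)"

lemma fin_dim_left_iff_span:
  "fin_dim_left H \<iota> V \<longleftrightarrow> (\<exists>S. finite S \<and> S \<subseteq> V \<and> V \<subseteq> span_by H (\<lambda>a s. \<iota> a \<otimes>\<^bsub>H\<^esub> s) S)"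
  unfolding fin_dim_left_def span_by_def by (simp add: subset_iff image_iff Ball_def)

lemma fin_dim_right_iff_span:
  "fin_dim_right H \<iota> V \<longleftrightarrow> (\<exists>S. finite S \<and> S \<subseteq> V \<and> V \<subseteq> span_by H (\<lambda>a s. s \<otimes>\<^bsub>H\<^esub> \<iota> a) S)"
  unfolding fin_dim_right_def span_by_def by (simp add: subset_iff image_iff Ball_def)

lemma (in abelian_group) minus_eq_zero_iff:
  "x \<in> carrier G \<Longrightarrow> y \<in> carrier G \<Longrightarrow> x \<ominus> y = \<zero> \<longleftrightarrow> x = y"
  by (simp add: minus_eq add.inv_solve_right')

lemma (in abelian_group) add_minus_add_left:
  assumes "s \<in> carrier G" "x \<in> carrier G" "y \<in> carrier G"
  shows "(s \<oplus> x) \<ominus> (s \<oplus> y) = x \<ominus> y"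
proof -
  have "(s \<oplus> x) \<ominus> (s \<oplus> y) = x \<oplus> (s \<oplus> (\<ominus> s \<oplus> \<ominus> y))"
    using assms by (simp add: minus_eq minus_add a_ac)
  also have "\<dots> = x \<ominus> y"
    using assms by (simp add: minus_eq r_neg2)
  finally show ?thesis .
qed

locale ultrametric_group = abelian_group G for G :: "('b, 'm) ring_scheme" (structure) +
  fixes v :: "'b \<Rightarrow> int"
  assumes valuation_diff:
    "\<lbrakk>x \<in> carrier G; y \<in> carrier G; x \<noteq> \<zero>; y \<noteq> \<zero>; v x \<noteq> v y\<rbrakk> \<Longrightarrow> v (x \<ominus> y) \<in> {v x, v y}"

locale scalar_action = ultrametric_group +
  fixes act :: "'a::division_ring \<Rightarrow> 'b \<Rightarrow> 'b"
  assumes act_closed: "x \<in> carrier G \<Longrightarrow> act a x \<in> carrier G"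
    and act_add: "\<lbrakk>x \<in> carrier G; y \<in> carrier G\<rbrakk> \<Longrightarrow> act a (x \<oplus> y) = act a x \<oplus> act a y"
    and act_diff: "x \<in> carrier G \<Longrightarrow> act a x \<ominus> act b x = act (a - b) x"
    and act_act: "x \<in> carrier G \<Longrightarrow> \<exists>c. act a (act b x) = act c x"
      \<comment> \<open>existential, so that scalar multiplication from the left and from the right both qualify\<close>
    and act_inverse: "\<lbrakk>x \<in> carrier G; a \<noteq> 0\<rbrakk> \<Longrightarrow> act (inverse a) (act a x) = x"
    and valuation_act: "\<lbrakk>x \<in> carrier G; x \<noteq> \<zero>; a \<noteq> 0\<rbrakk> \<Longrightarrow> v (act a x) = v x"
begin

lemma act_zero_left: "x \<in> carrier G \<Longrightarrow> act 0 x = \<zero>"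
  using act_diff[of x 0 0] act_closed[of x 0] by (simp add: minus_eq r_neg)

lemma act_zero_right: "act a \<zero> = \<zero>"
  using act_add[of \<zero> \<zero> a] act_closed[of \<zero> a] by simp

lemma span_empty: "span_by G act {} = {\<zero>}"
  by (simp add: span_by_def)

lemma span_insert:
  assumes "finite S" "S \<subseteq> carrier G" "s \<in> carrier G" "s \<notin> S"
  shows "span_by G act (insert s S) = {act a s \<oplus> z |a z. z \<in> span_by G act S}"
proof -
  have closed: "(\<lambda>t. act (c t) t) \<in> S \<rightarrow> carrier G" for c
    using assms(2) act_closed by blast
  have insert: "(\<Oplus>t\<in>insert s S. act (c t) t) = act (c s) s \<oplus> (\<Oplus>t\<in>S. act (c t) t)" for c
    using assms closed act_closed by (simp add: finsum_insert)
  have "(\<Oplus>t\<in>S. act ((c(s := a)) t) t) = (\<Oplus>t\<in>S. act (c t) t)" for a c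
    using assms(4) closed by (intro finsum_cong') auto
  then have "act a s \<oplus> (\<Oplus>t\<in>S. act (c t) t) = (\<Oplus>t\<in>insert s S. act ((c(s := a)) t) t)" for a c
    unfolding insert by simp
  then show ?thesis
    unfolding span_by_def insert by blast
qed

lemma span_subset_carrier: "finite S \<Longrightarrow> S \<subseteq> carrier G \<Longrightarrow> span_by G act S \<subseteq> carrier G"
  by (induction S rule: finite_induct) (auto simp: span_empty span_insert act_closed)

lemma span_diff:
  assumes "finite S" "S \<subseteq> carrier G"
  shows "y \<in> span_by G act S \<Longrightarrow> z \<in> span_by G act S \<Longrightarrow> y \<ominus> z \<in> span_by G act S"
  using assms
proof (induction S arbitrary: y z rule: finite_induct)
  case empty
  then show ?case by (simp add: span_empty minus_eq)
next
  case (insert s S)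
  obtain a y' b z' where y: "y = act a s \<oplus> y'" "y' \<in> span_by G act S"
    and z: "z = act b s \<oplus> z'" "z' \<in> span_by G act S"
    using insert.prems insert.hyps by (auto simp: span_insert)
  have "y' \<in> carrier G" "z' \<in> carrier G" "s \<in> carrier G"
    using y z insert span_subset_carrier by auto
  then have "y \<ominus> z = (act a s \<ominus> act b s) \<oplus> (y' \<ominus> z')"
    unfolding y z using act_closed by (simp add: minus_eq minus_add a_ac)
  also have "\<dots> = act (a - b) s \<oplus> (y' \<ominus> z')"
    using \<open>s \<in> carrier G\<close> by (simp add: act_diff)
  finally show ?case
    using insert y z by (auto simp: span_insert)
qed

lemma span_act:
  assumes "finite S" "S \<subseteq> carrier G"
  shows "y \<in> span_by G act S \<Longrightarrow> act a y \<in> span_by G act S"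
  using assms
proof (induction S arbitrary: y rule: finite_induct)
  case empty
  then show ?case by (simp add: span_empty act_zero_right)
next
  case (insert s S)
  obtain b y' where y: "y = act b s \<oplus> y'" "y' \<in> span_by G act S"
    using insert.prems insert.hyps by (auto simp: span_insert)
  have "y' \<in> carrier G" "s \<in> carrier G"
    using y insert span_subset_carrier by auto
  moreover obtain c where "act a (act b s) = act c s"
    using act_act \<open>s \<in> carrier G\<close> by blast
  ultimately have "act a y = act c s \<oplus> act a y'"
    unfolding y by (simp add: act_add act_closed)
  then show ?case
    using insert y by (auto simp: span_insert)
qed

lemma new_value_normalized:
  assumes S: "finite S" "S \<subseteq> carrier G" and s: "s \<in> carrier G" "s \<notin> S"
    and y: "y \<in> span_by G act (insert s S)" "y \<noteq> \<zero>" "v y \<notin> v ` (span_by G act S - {\<zero>})"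
  shows "\<exists>z\<in>span_by G act S. s \<oplus> z \<noteq> \<zero> \<and> v (s \<oplus> z) = v y"
proof -
  obtain a z where yz: "y = act a s \<oplus> z" and z: "z \<in> span_by G act S"
    using y(1) by (auto simp: span_insert[OF S s])
  have zc: "z \<in> carrier G"
    using z span_subset_carrier[OF S] by blast
  have "a \<noteq> 0"
  proof
    assume "a = 0"
    then have "y = z" using yz zc s by (simp add: act_zero_left)
    then show False using y z by blast
  qed
  have yc: "y \<in> carrier G"
    using yz zc s act_closed by simp
  have "act (inverse a) y = s \<oplus> act (inverse a) z"
    using yz zc s act_closed \<open>a \<noteq> 0\<close> by (simp add: act_add act_inverse)
  moreover have "act (inverse a) y \<noteq> \<zero>"
    using act_inverse[OF yc, of "inverse a"] y(2) \<open>a \<noteq> 0\<close> by (auto simp: act_zero_right)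
  moreover have "v (act (inverse a) y) = v y"
    using valuation_act yc y(2) \<open>a \<noteq> 0\<close> by simp
  ultimately show ?thesis
    using span_act[OF S z] by auto
qed

lemma span_insert_at_most_one_new_value:
  assumes S: "finite S" "S \<subseteq> carrier G" and s: "s \<in> carrier G" "s \<notin> S"
    and w: "w1 \<in> v ` (span_by G act (insert s S) - {\<zero>}) - v ` (span_by G act S - {\<zero>})"
      "w2 \<in> v ` (span_by G act (insert s S) - {\<zero>}) - v ` (span_by G act S - {\<zero>})"
  shows "w1 = w2"
proof (rule ccontr)
  assume "w1 \<noteq> w2"
  obtain z1 where z1: "z1 \<in> span_by G act S" "s \<oplus> z1 \<noteq> \<zero>" "v (s \<oplus> z1) = w1"
    using w(1) new_value_normalized[OF S s] by blast
  obtain z2 where z2: "z2 \<in> span_by G act S" "s \<oplus> z2 \<noteq> \<zero>" "v (s \<oplus> z2) = w2"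
    using w(2) new_value_normalized[OF S s] by blast
  have zc: "z1 \<in> carrier G" "z2 \<in> carrier G"
    using z1 z2 span_subset_carrier[OF S] by auto
  have "z1 \<ominus> z2 \<noteq> \<zero>"
    using z1 z2 zc \<open>w1 \<noteq> w2\<close> by (auto simp: minus_eq_zero_iff)
  moreover have "v (z1 \<ominus> z2) \<in> {w1, w2}"
    using valuation_diff[of "s \<oplus> z1" "s \<oplus> z2"] z1 z2 zc s \<open>w1 \<noteq> w2\<close> by (simp add: add_minus_add_left)
  ultimately show False
    using span_diff[OF S z1(1) z2(1)] w by blast
qed

theorem finite_span_values:
  "finite S \<Longrightarrow> S \<subseteq> carrier G \<Longrightarrow> finite (v ` (span_by G act S - {\<zero>}))"
proof (induction S rule: finite_induct)
  case empty
  show ?case by (simp add: span_empty)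
next
  case (insert s S)
  let ?old = "v ` (span_by G act S - {\<zero>})" and ?new = "v ` (span_by G act (insert s S) - {\<zero>})"
  have S: "S \<subseteq> carrier G" and s: "s \<in> carrier G"
    using insert.prems by auto
  have "finite (?new - ?old)"
  proof (cases "?new - ?old = {}")
    case False
    then obtain w where "w \<in> ?new - ?old" by blast
    then have "?new - ?old \<subseteq> {w}"
      using span_insert_at_most_one_new_value[OF insert.hyps(1) S s insert.hyps(2)] by blast
    then show ?thesis by (rule finite_subset) simp
  next
    case True
    then show ?thesis by (simp only: finite.emptyI)
  qed
  moreover have "?new \<subseteq> ?old \<union> (?new - ?old)"
    by blast
  ultimately show ?case
    using insert.IH[OF S] by (meson finite_UnI finite_subset)
qed

end

text \<open>The products of the skew series fields are never shown to be associative, so only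
  the properties of the multiplication used below are assumed.\<close>

locale valued_structure = ultrametric_group R v for R :: "'b ring" (structure) and v +
  assumes m_closed: "\<lbrakk>x \<in> carrier R; y \<in> carrier R\<rbrakk> \<Longrightarrow> x \<otimes> y \<in> carrier R"
    and r_diff_distr: "\<lbrakk>x \<in> carrier R; y \<in> carrier R; z \<in> carrier R\<rbrakk> \<Longrightarrow> x \<otimes> (y \<ominus> z) = x \<otimes> y \<ominus> x \<otimes> z"
    and one_not_zero: "\<one> \<noteq> \<zero>"
    and mult_nonzero: "\<lbrakk>x \<in> carrier R; y \<in> carrier R; x \<noteq> \<zero>; y \<noteq> \<zero>\<rbrakk> \<Longrightarrow> x \<otimes> y \<noteq> \<zero>"
    and valuation_mult: "\<lbrakk>x \<in> carrier R; y \<in> carrier R; x \<noteq> \<zero>; y \<noteq> \<zero>\<rbrakk> \<Longrightarrow> v (x \<otimes> y) = v x + v y"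
begin

lemma r_zero_mult: "x \<in> carrier R \<Longrightarrow> x \<otimes> \<zero> = \<zero>"
  using r_diff_distr[of x \<zero> \<zero>] m_closed[of x \<zero>] by (simp add: minus_eq r_neg)

lemma m_lcancel:
  assumes "x \<in> carrier R" "x \<noteq> \<zero>" "y \<in> carrier R" "z \<in> carrier R" "x \<otimes> y = x \<otimes> z"
  shows "y = z"
proof -
  have "x \<otimes> (y \<ominus> z) = \<zero>"
    using assms m_closed r_diff_distr[of x y z] by (simp add: minus_eq_zero_iff)
  then show ?thesis
    using assms mult_nonzero[of x "y \<ominus> z"] by (auto simp: minus_eq_zero_iff)
qed

lemma Units_inv_closed: "u \<in> Units R \<Longrightarrow> inv u \<in> carrier R"
proof -
  assume u: "u \<in> Units R"
  then obtain x where x: "x \<in> carrier R" "x \<otimes> u = \<one>" "u \<otimes> x = \<one>" and "u \<in> carrier R"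
    unfolding Units_def by blast
  have "u \<noteq> \<zero>"
    using x r_zero_mult one_not_zero by auto
  then have "\<exists>!y. y \<in> carrier R \<and> u \<otimes> y = \<one> \<and> y \<otimes> u = \<one>"
    using x \<open>u \<in> carrier R\<close> m_lcancel by metis
  then show ?thesis
    unfolding m_inv_def by (rule theI'[THEN conjunct1])
qed

lemma gen_subfield_subset_carrier:
  assumes "\<And>a. \<iota> a \<in> carrier R" "x \<in> carrier R"
  shows "gen_subfield R \<iota> x \<subseteq> carrier R"
proof
  fix y assume "y \<in> gen_subfield R \<iota> x"
  then show "y \<in> carrier R"
    by induction (use assms m_closed Units_inv_closed in auto)
qed

lemma gen_subfield_multiples_of_value:
  assumes "gen_subfield R \<iota> x \<subseteq> carrier R" "y \<in> gen_subfield R \<iota> x" "y \<noteq> \<zero>"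
  shows "\<exists>z\<in>gen_subfield R \<iota> x. z \<noteq> \<zero> \<and> v z = int (Suc n) * v y"
proof (induction n)
  case 0
  show ?case using assms by auto
next
  case (Suc n)
  then obtain z where z: "z \<in> gen_subfield R \<iota> x" "z \<noteq> \<zero>" "v z = int (Suc n) * v y"
    by blast
  have "y \<in> carrier R" "z \<in> carrier R"
    using assms(1,2) z(1) by auto
  have "y \<otimes> z \<in> gen_subfield R \<iota> x"
    using assms(2) z(1) by (rule gen_subfield.mult)
  moreover have "y \<otimes> z \<noteq> \<zero>" "v (y \<otimes> z) = int (Suc (Suc n)) * v y"
    using \<open>y \<in> carrier R\<close> \<open>z \<in> carrier R\<close> assms(3) z(2,3) mult_nonzero valuation_mult
    by (auto simp: algebra_simps)
  ultimately show ?case by blast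
qed

end

locale valued_algebra = valued_structure R v + scalar_action R v act
  for R :: "'b ring" (structure) and v and act
begin

theorem regular_extI:
  assumes \<iota>_closed: "\<And>a. \<iota> a \<in> carrier R"
    and spanned: "\<And>x. x \<in> carrier R \<Longrightarrow> algebraic_over R \<iota> x \<Longrightarrow>
      \<exists>S. finite S \<and> S \<subseteq> gen_subfield R \<iota> x \<and> gen_subfield R \<iota> x \<subseteq> span_by R act S"
    and nonzero_value: "\<And>x. x \<in> carrier R \<Longrightarrow> x \<notin> range \<iota> \<Longrightarrow>
      \<exists>y\<in>gen_subfield R \<iota> x. y \<noteq> \<zero> \<and> v y \<noteq> 0"
  shows "regular_ext R \<iota>"
  unfolding regular_ext_def
proof (intro ballI impI)
  fix x assume x: "x \<in> carrier R" and alg: "algebraic_over R \<iota> x"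
  show "x \<in> range \<iota>"
  proof (rule ccontr)
    assume "x \<notin> range \<iota>"
    then obtain y where y: "y \<in> gen_subfield R \<iota> x" "y \<noteq> \<zero>" "v y \<noteq> 0"
      using nonzero_value x by blast
    obtain S where S: "finite S" "S \<subseteq> gen_subfield R \<iota> x" "gen_subfield R \<iota> x \<subseteq> span_by R act S"
      using spanned x alg by blast
    have sub: "gen_subfield R \<iota> x \<subseteq> carrier R"
      using gen_subfield_subset_carrier \<iota>_closed x .
    have "int (Suc n) * v y \<in> v ` (span_by R act S - {\<zero>})" for n
    proof -
      obtain z where "z \<in> gen_subfield R \<iota> x" "z \<noteq> \<zero>" "v z = int (Suc n) * v y"
        using gen_subfield_multiples_of_value[OF sub y(1,2)] by blast
      then show ?thesis
        using S(3) by (metis DiffI image_eqI singletonD subsetD)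
    qed
    then have "range (\<lambda>n. int (Suc n) * v y) \<subseteq> v ` (span_by R act S - {\<zero>})"
      by blast
    moreover have "finite (v ` (span_by R act S - {\<zero>}))"
      using finite_span_values S sub by blast
    moreover have "inj (\<lambda>n. int (Suc n) * v y)"
      using y(3) by (auto simp: inj_def)
    ultimately show False
      using finite_subset finite_imageD by (metis infinite_UNIV_nat)
  qed
qed

end

section \<open>Laurent series\<close>

definition lorder :: "(int \<Rightarrow> 'a::zero) \<Rightarrow> int" where
  "lorder f = (LEAST i. f i \<noteq> 0)"

lemma lorder_eqI:
  assumes "f n \<noteq> 0" "\<And>i. i < n \<Longrightarrow> f i = 0"
  shows "lorder f = n"
  unfolding lorder_def
proof (rule Least_equality)
  show "f n \<noteq> 0" by fact
  show "n \<le> i" if "f i \<noteq> 0" for i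
    using assms(2) that by (meson not_less)
qed

lemma lorder:
  assumes "f \<in> laurent_carrier" "f \<noteq> (\<lambda>i. 0)"
  shows "f (lorder f) \<noteq> 0" and "i < lorder f \<Longrightarrow> f i = 0"
proof -
  obtain n where n: "\<forall>i<n. f i = 0"
    using assms(1) unfolding laurent_carrier_def by blast
  obtain j where j: "f j \<noteq> 0"
    using assms(2) by blast
  define d where "d = (LEAST d. f (n + int d) \<noteq> 0)"
  have "n \<le> j"
    using n j by (meson not_less)
  have d: "f (n + int d) \<noteq> 0"
    unfolding d_def by (rule LeastI[of _ "nat (j - n)"]) (use \<open>n \<le> j\<close> j in simp)
  have below: "f i = 0" if "i < n + int d" for i
  proof (cases "i < n")
    case True
    then show ?thesis using n by blast
  next
    case False
    then have "nat (i - n) < d"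
      using that by (simp add: nat_less_iff)
    then have "\<not> f (n + int (nat (i - n))) \<noteq> 0"
      unfolding d_def by (rule not_less_Least)
    then show ?thesis
      using False by simp
  qed
  have "lorder f = n + int d"
    using d below by (rule lorder_eqI)
  then show "f (lorder f) \<noteq> 0" and "i < lorder f \<Longrightarrow> f i = 0"
    using d below by auto
qed

lemma lorder_diff:
  fixes f g :: "int \<Rightarrow> 'a::ab_group_add"
  assumes "f \<in> laurent_carrier" "g \<in> laurent_carrier" "f \<noteq> (\<lambda>i. 0)" "g \<noteq> (\<lambda>i. 0)"
    and "lorder f \<noteq> lorder g"
  shows "lorder (\<lambda>i. f i - g i) = min (lorder f) (lorder g)"
proof -
  note f = lorder[OF assms(1,3)] and g = lorder[OF assms(2,4)]
  show ?thesis
  proof (cases "lorder f < lorder g")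
    case True
    have "lorder (\<lambda>i. f i - g i) = lorder f"
      by (rule lorder_eqI) (use f g True in auto)
    then show ?thesis using True by simp
  next
    case False
    then have "lorder g < lorder f" using assms(5) by simp
    have "lorder (\<lambda>i. f i - g i) = lorder g"
      by (rule lorder_eqI) (use f g \<open>lorder g < lorder f\<close> in auto)
    then show ?thesis using False by simp
  qed
qed

lemma laurent_const: "const_series a \<in> laurent_carrier"
  unfolding laurent_carrier_def const_series_def by (auto intro: exI[of _ 0])

definition pointwise_laurent :: "(int \<Rightarrow> 'a::ab_group_add) ring \<Rightarrow> bool" where
  "pointwise_laurent H \<longleftrightarrow>
     carrier H = laurent_carrier \<and> zero H = (\<lambda>i. 0) \<and> add H = (\<lambda>f g i. f i + g i)"

lemma pointwise_laurent_abelian_group: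
  assumes "pointwise_laurent H"
  shows "abelian_group H"
proof -
  have H: "carrier H = laurent_carrier" "zero H = (\<lambda>i. 0)" "add H = (\<lambda>f g i. f i + g i)"
    using assms unfolding pointwise_laurent_def by auto
  have add_closed: "(\<lambda>i. f i + g i) \<in> laurent_carrier"
    if fg: "f \<in> laurent_carrier" "g \<in> laurent_carrier" for f g :: "int \<Rightarrow> 'a"
  proof -
    obtain n m where "\<forall>i<n. f i = 0" "\<forall>i<m. g i = 0"
      using fg unfolding laurent_carrier_def by blast
    then have "\<forall>i<min n m. f i + g i = 0" by simp
    then show ?thesis unfolding laurent_carrier_def by blast
  qed
  have zero_closed: "(\<lambda>i. 0) \<in> laurent_carrier"
    unfolding laurent_carrier_def by simp
  have neg_closed: "(\<lambda>i. - f i) \<in> laurent_carrier" if "f \<in> laurent_carrier" for f :: "int \<Rightarrow> 'a"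
    using that unfolding laurent_carrier_def by auto
  show ?thesis
  proof (rule abelian_groupI)
    fix x assume "x \<in> carrier H"
    then show "\<exists>y\<in>carrier H. y \<oplus>\<^bsub>H\<^esub> x = \<zero>\<^bsub>H\<^esub>"
      using neg_closed by (auto simp: H intro!: bexI[of _ "\<lambda>i. - x i"])
  qed (auto simp: H add_closed add.assoc add.commute zero_closed)
qed

lemma pointwise_laurent_minus:
  assumes "pointwise_laurent H" "f \<in> carrier H" "g \<in> carrier H"
  shows "f \<ominus>\<^bsub>H\<^esub> g = (\<lambda>i. f i - g i)"
proof -
  interpret abelian_group H
    using assms(1) by (rule pointwise_laurent_abelian_group)
  have H: "carrier H = laurent_carrier" "zero H = (\<lambda>i. 0)" "add H = (\<lambda>f g i. f i + g i)"
    using assms(1) unfolding pointwise_laurent_def by auto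
  have "\<ominus>\<^bsub>H\<^esub> g = (\<lambda>i. - g i)"
    by (rule minus_equality) (use assms(3) in \<open>auto simp: H laurent_carrier_def\<close>)
  then show ?thesis
    by (simp add: minus_eq H)
qed

lemma pointwise_laurent_ultrametric:
  assumes "pointwise_laurent H"
  shows "ultrametric_group H lorder"
proof -
  interpret abelian_group H
    using assms by (rule pointwise_laurent_abelian_group)
  show ?thesis
  proof unfold_locales
    fix x y
    assume "x \<in> carrier H" "y \<in> carrier H" "x \<noteq> \<zero>\<^bsub>H\<^esub>" "y \<noteq> \<zero>\<^bsub>H\<^esub>" "lorder x \<noteq> lorder y"
    then have "lorder (x \<ominus>\<^bsub>H\<^esub> y) = min (lorder x) (lorder y)"
      using assms lorder_diff by (simp add: pointwise_laurent_minus pointwise_laurent_def)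
    then show "lorder (x \<ominus>\<^bsub>H\<^esub> y) \<in> {lorder x, lorder y}"
      by (simp add: min_def)
  qed
qed

text \<open>Here \<open>\<mu>\<close> multiplies a coefficient by a scalar, from the left or from the right.\<close>

lemma pointwise_laurent_scalar_action:
  fixes \<mu> :: "'a::division_ring \<Rightarrow> 'a \<Rightarrow> 'a"
  assumes H: "pointwise_laurent H" and act: "\<And>a f. f \<in> carrier H \<Longrightarrow> act a f = (\<lambda>m. \<mu> a (f m))"
    and \<mu>_add: "\<And>a x y. \<mu> a (x + y) = \<mu> a x + \<mu> a y"
    and \<mu>_diff: "\<And>a b x. \<mu> a x - \<mu> b x = \<mu> (a - b) x"
    and \<mu>_\<mu>: "\<And>a b. \<exists>c. \<forall>x. \<mu> a (\<mu> b x) = \<mu> c x"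
    and \<mu>_inverse: "\<And>a x. a \<noteq> 0 \<Longrightarrow> \<mu> (inverse a) (\<mu> a x) = x"
  shows "scalar_action H lorder act"
proof -
  interpret ultrametric_group H lorder
    using H by (rule pointwise_laurent_ultrametric)
  have carrier: "carrier H = laurent_carrier" and zero: "zero H = (\<lambda>i. 0)"
    and add: "add H = (\<lambda>f g i. f i + g i)"
    using H unfolding pointwise_laurent_def by auto
  have \<mu>_zero: "\<mu> a 0 = 0" for a
    using \<mu>_add[of a 0 0] by simp
  have \<mu>_nonzero: "\<mu> a x \<noteq> 0" if "a \<noteq> 0" "x \<noteq> 0" for a x
    using \<mu>_inverse[OF that(1), of x] \<mu>_zero that(2) by auto
  have closed: "(\<lambda>m. \<mu> a (f m)) \<in> laurent_carrier" if f: "f \<in> laurent_carrier" for a f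
  proof -
    obtain n where "\<forall>i<n. f i = 0"
      using f unfolding laurent_carrier_def by blast
    then have "\<forall>i<n. \<mu> a (f i) = 0"
      by (simp add: \<mu>_zero)
    then show ?thesis
      unfolding laurent_carrier_def by blast
  qed
  show ?thesis
  proof unfold_locales
    fix x a assume x: "x \<in> carrier H"
    show "act a x \<in> carrier H"
      using x closed by (simp add: act carrier)
    show "\<exists>c. act a (act b x) = act c x" for b
      using \<mu>_\<mu>[of a b] x closed by (auto simp: act carrier)
    show "act a x \<ominus>\<^bsub>H\<^esub> act b x = act (a - b) x" for b
      using x closed by (simp add: act pointwise_laurent_minus[OF H] carrier \<mu>_diff)
    show "act (inverse a) (act a x) = x" if "a \<noteq> 0"
      using x closed that by (simp add: act carrier \<mu>_inverse)
    show "lorder (act a x) = lorder x" if "x \<noteq> \<zero>\<^bsub>H\<^esub>" "a \<noteq> 0"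
    proof -
      have "x \<noteq> (\<lambda>i. 0)" using that zero by simp
      then show ?thesis
        using x lorder[of x] \<mu>_nonzero[OF that(2)] \<mu>_zero
        by (auto simp: act carrier intro!: lorder_eqI)
    qed
  next
    fix x y a assume "x \<in> carrier H" "y \<in> carrier H"
    then show "act a (x \<oplus>\<^bsub>H\<^esub> y) = act a x \<oplus>\<^bsub>H\<^esub> act a y"
      using a_closed[of x y] by (simp add: act add \<mu>_add)
  qed
qed

lemma pointwise_laurent_nonzero_value:
  assumes H: "pointwise_laurent H" and x: "x \<in> carrier H" "x \<notin> range const_series"
  shows "\<exists>y\<in>gen_subfield H const_series x. y \<noteq> \<zero>\<^bsub>H\<^esub> \<and> lorder y \<noteq> 0"
proof -
  interpret abelian_group H
    using H by (rule pointwise_laurent_abelian_group)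
  have carrier: "carrier H = laurent_carrier" and zero: "\<zero>\<^bsub>H\<^esub> = (\<lambda>i. 0)"
    using H unfolding pointwise_laurent_def by auto
  have "x \<noteq> const_series 0"
    using x(2) by blast
  then have x0: "x \<noteq> (\<lambda>i. 0)"
    by (auto simp: const_series_def fun_eq_iff)
  show ?thesis
  proof (cases "lorder x = 0")
    case False
    then show ?thesis
      using x0 zero gen_subfield.gen[of x H const_series] by auto
  next
    case True
    define y where "y = x \<ominus>\<^bsub>H\<^esub> const_series (x 0)"
    have c: "const_series (x 0) \<in> carrier H"
      using laurent_const carrier by simp
    have "y \<in> gen_subfield H const_series x"
      unfolding y_def a_minus_def by (intro gen_subfield.add gen_subfield.neg gen_subfield.gen gen_subfield.base)
    moreover have "y \<in> laurent_carrier"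
      unfolding y_def using minus_closed[OF x(1) c] carrier by simp
    moreover have y: "y = (\<lambda>i. x i - const_series (x 0) i)"
      unfolding y_def using c by (rule pointwise_laurent_minus[OF H x(1)])
    have "y \<noteq> (\<lambda>i. 0)"
    proof
      assume y0: "y = (\<lambda>i. 0)"
      have "x i = const_series (x 0) i" for i
        using fun_cong[OF y0, of i] unfolding y by simp
      then have "x = const_series (x 0)" ..
      then show False
        using x(2) by blast
    qed
    moreover have "y i = 0" if "i \<le> 0" for i
    proof (cases "i = 0")
      case False
      then have "x i = 0"
        using lorder(2)[of x i] x(1) x0 True that carrier by simp
      then show ?thesis
        using False by (simp add: y const_series_def)
    qed (simp add: y const_series_def)
    ultimately show ?thesis
      using lorder(1)[of y] zero by force
  qed
qed

section \<open>The skew series field k((t,sigma))\<close>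

lemma skew_series_t_pointwise: "pointwise_laurent (skew_series_t \<sigma>)"
  by (simp add: pointwise_laurent_def skew_series_t_def)

lemma skew_series_t_mult_eq_sum:
  fixes \<sigma> :: "'a::division_ring \<Rightarrow> 'a"
  assumes \<sigma>: "ring_automorphism \<sigma>" and f: "\<And>i. i < nf \<Longrightarrow> f i = 0" and g: "\<And>i. i < ng \<Longrightarrow> g i = 0"
  shows "(f \<otimes>\<^bsub>skew_series_t \<sigma>\<^esub> g) m = (\<Sum>i = nf..m - ng. f i * spow \<sigma> i (g (m - i)))"
proof -
  have sub: "{i. f i \<noteq> 0 \<and> g (m - i) \<noteq> 0} \<subseteq> {nf..m - ng}"
  proof
    fix i assume "i \<in> {i. f i \<noteq> 0 \<and> g (m - i) \<noteq> 0}"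
    then have "\<not> i < nf" "\<not> m - i < ng"
      using f g by auto
    then show "i \<in> {nf..m - ng}" by simp
  qed
  have "(\<Sum>i | f i \<noteq> 0 \<and> g (m - i) \<noteq> 0. f i * spow \<sigma> i (g (m - i)))
      = (\<Sum>i = nf..m - ng. f i * spow \<sigma> i (g (m - i)))"
    by (rule sum.mono_neutral_left[OF _ sub])
      (auto simp: ring_automorphism_simps[OF ring_automorphism_spow[OF \<sigma>]])
  then show ?thesis
    by (simp add: skew_series_t_def)
qed

lemma skew_series_t_const_mult:
  fixes \<sigma> :: "'a::division_ring \<Rightarrow> 'a"
  assumes "ring_automorphism \<sigma>"
  shows "const_series a \<otimes>\<^bsub>skew_series_t \<sigma>\<^esub> f = (\<lambda>m. a * f m)"
proof
  fix m
  have "{i. const_series a i \<noteq> 0 \<and> f (m - i) \<noteq> 0} = (if a \<noteq> 0 \<and> f m \<noteq> 0 then {0} else {})"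
    by (auto simp: const_series_def)
  then show "(const_series a \<otimes>\<^bsub>skew_series_t \<sigma>\<^esub> f) m = a * f m"
    by (auto simp: skew_series_t_def const_series_def spow_def)
qed

lemma skew_series_t_mult_closed:
  assumes "ring_automorphism \<sigma>" "f \<in> laurent_carrier" "g \<in> laurent_carrier"
  shows "f \<otimes>\<^bsub>skew_series_t \<sigma>\<^esub> g \<in> laurent_carrier"
proof -
  obtain nf ng where f: "\<And>i. i < nf \<Longrightarrow> f i = 0" and g: "\<And>i. i < ng \<Longrightarrow> g i = 0"
    using assms(2,3) unfolding laurent_carrier_def by blast
  have "(f \<otimes>\<^bsub>skew_series_t \<sigma>\<^esub> g) m = 0" if "m < nf + ng" for m
    using that by (simp add: skew_series_t_mult_eq_sum[OF assms(1) f g])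
  then show ?thesis
    unfolding laurent_carrier_def by blast
qed

lemma skew_series_t_mult_diff:
  fixes \<sigma> :: "'a::division_ring \<Rightarrow> 'a"
  assumes \<sigma>: "ring_automorphism \<sigma>" and "f \<in> laurent_carrier" "g \<in> laurent_carrier" "h \<in> laurent_carrier"
  shows "f \<otimes>\<^bsub>skew_series_t \<sigma>\<^esub> (\<lambda>i. g i - h i)
    = (\<lambda>m. (f \<otimes>\<^bsub>skew_series_t \<sigma>\<^esub> g) m - (f \<otimes>\<^bsub>skew_series_t \<sigma>\<^esub> h) m)"
proof
  fix m
  obtain nf ng nh where f: "\<And>i. i < nf \<Longrightarrow> f i = 0"
    and g: "\<And>i. i < ng \<Longrightarrow> g i = 0" and h: "\<And>i. i < nh \<Longrightarrow> h i = 0"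
    using assms(2-4) unfolding laurent_carrier_def by blast
  let ?n = "min ng nh"
  have g': "\<And>i. i < ?n \<Longrightarrow> g i = 0" and h': "\<And>i. i < ?n \<Longrightarrow> h i = 0"
    and gh: "\<And>i. i < ?n \<Longrightarrow> g i - h i = 0"
    using g h by simp_all
  have "(f \<otimes>\<^bsub>skew_series_t \<sigma>\<^esub> (\<lambda>i. g i - h i)) m
      = (\<Sum>i = nf..m - ?n. f i * spow \<sigma> i (g (m - i) - h (m - i)))"
    by (rule skew_series_t_mult_eq_sum[OF \<sigma> f gh])
  also have "\<dots> = (\<Sum>i = nf..m - ?n. f i * spow \<sigma> i (g (m - i)))
      - (\<Sum>i = nf..m - ?n. f i * spow \<sigma> i (h (m - i)))"
    by (simp add: sum_subtractf right_diff_distrib ring_automorphism_simps[OF ring_automorphism_spow[OF \<sigma>]])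
  finally show "(f \<otimes>\<^bsub>skew_series_t \<sigma>\<^esub> (\<lambda>i. g i - h i)) m
      = (f \<otimes>\<^bsub>skew_series_t \<sigma>\<^esub> g) m - (f \<otimes>\<^bsub>skew_series_t \<sigma>\<^esub> h) m"
    by (simp only: skew_series_t_mult_eq_sum[OF \<sigma> f g'] skew_series_t_mult_eq_sum[OF \<sigma> f h'])
qed

lemma skew_series_t_lorder_mult:
  fixes \<sigma> :: "'a::division_ring \<Rightarrow> 'a"
  assumes \<sigma>: "ring_automorphism \<sigma>"
    and f: "f \<in> laurent_carrier" "f \<noteq> (\<lambda>i. 0)" and g: "g \<in> laurent_carrier" "g \<noteq> (\<lambda>i. 0)"
  shows "f \<otimes>\<^bsub>skew_series_t \<sigma>\<^esub> g \<noteq> (\<lambda>i. 0)"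
    and "lorder (f \<otimes>\<^bsub>skew_series_t \<sigma>\<^esub> g) = lorder f + lorder g"
proof -
  let ?a = "lorder f" and ?b = "lorder g"
  have prod: "(f \<otimes>\<^bsub>skew_series_t \<sigma>\<^esub> g) m = (\<Sum>i = ?a..m - ?b. f i * spow \<sigma> i (g (m - i)))" for m
    using skew_series_t_mult_eq_sum[OF \<sigma>] lorder(2)[OF f] lorder(2)[OF g] by blast
  have lead: "(f \<otimes>\<^bsub>skew_series_t \<sigma>\<^esub> g) (?a + ?b) \<noteq> 0"
    using lorder(1)[OF f] lorder(1)[OF g]
    by (simp add: prod ring_automorphism_simps[OF ring_automorphism_spow[OF \<sigma>]])
  have below: "(f \<otimes>\<^bsub>skew_series_t \<sigma>\<^esub> g) m = 0" if "m < ?a + ?b" for m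
    using that by (simp add: prod)
  show "f \<otimes>\<^bsub>skew_series_t \<sigma>\<^esub> g \<noteq> (\<lambda>i. 0)"
    using lead by auto
  show "lorder (f \<otimes>\<^bsub>skew_series_t \<sigma>\<^esub> g) = ?a + ?b"
    using lead below by (rule lorder_eqI)
qed

lemma skew_series_t_valued:
  fixes \<sigma> :: "'a::division_ring \<Rightarrow> 'a"
  assumes \<sigma>: "ring_automorphism \<sigma>"
  shows "valued_algebra (skew_series_t \<sigma>) lorder (\<lambda>a f. const_series a \<otimes>\<^bsub>skew_series_t \<sigma>\<^esub> f)"
proof -
  let ?T = "skew_series_t \<sigma>"
  interpret ultrametric_group ?T lorder
    by (rule pointwise_laurent_ultrametric[OF skew_series_t_pointwise])
  have T: "carrier ?T = laurent_carrier" "\<zero>\<^bsub>?T\<^esub> = (\<lambda>i. 0)" "\<one>\<^bsub>?T\<^esub> = (\<lambda>i. if i = 0 then 1 else 0)"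
    by (simp_all add: skew_series_t_def)
  have "valued_structure ?T lorder"
  proof unfold_locales
    fix x y z assume "x \<in> carrier ?T" "y \<in> carrier ?T" "z \<in> carrier ?T"
    then show "x \<otimes>\<^bsub>?T\<^esub> (y \<ominus>\<^bsub>?T\<^esub> z) = x \<otimes>\<^bsub>?T\<^esub> y \<ominus>\<^bsub>?T\<^esub> x \<otimes>\<^bsub>?T\<^esub> z"
      using skew_series_t_mult_diff[OF \<sigma>] skew_series_t_mult_closed[OF \<sigma>]
      by (simp add: pointwise_laurent_minus[OF skew_series_t_pointwise] T)
  qed (use skew_series_t_mult_closed[OF \<sigma>] skew_series_t_lorder_mult[OF \<sigma>] in \<open>auto simp: T fun_eq_iff\<close>)
  moreover have "scalar_action ?T lorder (\<lambda>a f. const_series a \<otimes>\<^bsub>?T\<^esub> f)"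
  proof (rule pointwise_laurent_scalar_action[OF skew_series_t_pointwise, where \<mu> = "(*)"])
    show "\<exists>c. \<forall>x. a * (b * x) = c * x" for a b :: 'a
      by (metis mult.assoc)
    show "inverse a * (a * x) = x" if "a \<noteq> 0" for a x :: 'a
      using that by (simp add: mult.assoc[symmetric])
  qed (auto simp: skew_series_t_const_mult[OF \<sigma>] algebra_simps)
  ultimately show ?thesis
    by (simp add: valued_algebra_def)
qed

theorem regular_ext_skew_series_t:
  fixes \<sigma> :: "'a::division_ring \<Rightarrow> 'a"
  assumes "ring_automorphism \<sigma>"
  shows "regular_ext (skew_series_t \<sigma>) const_series"
proof -
  interpret valued_algebra "skew_series_t \<sigma>" lorder "\<lambda>a f. const_series a \<otimes>\<^bsub>skew_series_t \<sigma>\<^esub> f"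
    using assms by (rule skew_series_t_valued)
  show ?thesis
  proof (rule regular_extI)
    show "const_series a \<in> carrier (skew_series_t \<sigma>)" for a
      by (simp add: laurent_const skew_series_t_def)
  qed (auto simp: algebraic_over_def fin_dim_left_iff_span
      intro: pointwise_laurent_nonzero_value[OF skew_series_t_pointwise])
qed

section \<open>The skew series field k_{sigma,delta}((z))\<close>

lemma sigma_derivation_zero:
  assumes "sigma_derivation \<sigma> \<delta>"
  shows "\<delta> 0 = 0" and "(\<delta> ^^ k) 0 = 0"
proof -
  show "\<delta> 0 = 0"
    using assms[unfolded sigma_derivation_def] by (metis add_cancel_right_right)
  then show "(\<delta> ^^ k) 0 = 0"
    by (induction k) simp_all
qed

lemma zpos_below: "l < int n \<Longrightarrow> zpos \<sigma> \<delta> n a l = 0"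
  by (cases n) auto

lemma zpos_diag: "zpos \<sigma> \<delta> n a (int n) = (\<sigma> ^^ n) a"
  by (induction n) simp_all

lemma zpos_zero:
  assumes "ring_automorphism \<sigma>" "sigma_derivation \<sigma> \<delta>"
  shows "zpos \<sigma> \<delta> n 0 l = 0"
  by (induction n arbitrary: l) (simp_all add: sigma_derivation_zero[OF assms(2)] ring_automorphism_simps[OF assms(1)])

lemma zneg_below:
  assumes "ring_automorphism \<sigma>" "sigma_derivation \<sigma> \<delta>"
  shows "l < - int n \<Longrightarrow> zneg \<sigma> \<delta> n a l = 0"
  by (induction n arbitrary: l)
    (simp_all add: sigma_derivation_zero[OF assms(2)] ring_automorphism_simps[OF ring_automorphism_inv[OF assms(1)]])

lemma zneg_diag:
  assumes "ring_automorphism \<sigma>" "sigma_derivation \<sigma> \<delta>"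
  shows "zneg \<sigma> \<delta> n a (- int n) = (inv_into UNIV \<sigma> ^^ n) a"
proof (induction n)
  case (Suc n)
  have "zneg \<sigma> \<delta> n a (- int (Suc n)) = 0"
    by (rule zneg_below[OF assms]) simp
  then show ?case
    using Suc by (simp add: sigma_derivation_zero[OF assms(2)] ring_automorphism_simps[OF ring_automorphism_inv[OF assms(1)]])
qed simp

lemma zneg_zero:
  assumes "ring_automorphism \<sigma>" "sigma_derivation \<sigma> \<delta>"
  shows "zneg \<sigma> \<delta> n 0 l = 0"
  by (induction n arbitrary: l)
    (simp_all add: sigma_derivation_zero[OF assms(2)] ring_automorphism_simps[OF ring_automorphism_inv[OF assms(1)]])

lemma zcoeff_below:
  assumes "ring_automorphism \<sigma>" "sigma_derivation \<sigma> \<delta>" "l < j"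
  shows "zcoeff \<sigma> \<delta> a j l = 0"
proof (cases "0 \<le> j")
  case True
  then show ?thesis
    using assms(3) zpos_below[of l "nat j"] by (simp add: zcoeff_def)
next
  case False
  then show ?thesis
    using assms(3) zneg_below[OF assms(1,2), of l "nat (- j)"] by (simp add: zcoeff_def)
qed

lemma zcoeff_zero:
  assumes "ring_automorphism \<sigma>" "sigma_derivation \<sigma> \<delta>"
  shows "zcoeff \<sigma> \<delta> 0 j l = 0"
  by (simp add: zcoeff_def zpos_zero[OF assms] zneg_zero[OF assms])

lemma zcoeff_diag:
  assumes "ring_automorphism \<sigma>" "sigma_derivation \<sigma> \<delta>"
  shows "zcoeff \<sigma> \<delta> a j j = 0 \<longleftrightarrow> a = 0"
proof (cases "0 \<le> j")
  case True
  then show ?thesis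
    using zpos_diag[of \<sigma> \<delta> "nat j" a] ring_automorphism_simps(3)[OF ring_automorphism_funpow[OF assms(1)]]
    by (simp add: zcoeff_def)
next
  case False
  then show ?thesis
    using zneg_diag[OF assms, of "nat (- j)" a]
      ring_automorphism_simps(3)[OF ring_automorphism_funpow[OF ring_automorphism_inv[OF assms(1)]]]
    by (simp add: zcoeff_def)
qed

lemma skew_series_z_pointwise: "pointwise_laurent (skew_series_z \<sigma> \<delta>)"
  by (simp add: pointwise_laurent_def skew_series_z_def)

lemma skew_series_z_mult_eq_sum:
  assumes \<sigma>\<delta>: "ring_automorphism \<sigma>" "sigma_derivation \<sigma> \<delta>"
    and s: "\<And>i. i < ns \<Longrightarrow> s i = 0" and r: "\<And>i. i < nr \<Longrightarrow> r i = 0"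
  shows "(s \<otimes>\<^bsub>skew_series_z \<sigma> \<delta>\<^esub> r) m = (\<Sum>p\<in>{ns..m - nr} \<times> {nr..m - ns}.
    zcoeff \<sigma> \<delta> (s (fst p)) (snd p) (m - fst p) * r (snd p))"
proof -
  have sub: "{(i, j). s i \<noteq> 0 \<and> r j \<noteq> 0 \<and> i + j \<le> m} \<subseteq> {ns..m - nr} \<times> {nr..m - ns}"
  proof
    fix p assume "p \<in> {(i, j). s i \<noteq> 0 \<and> r j \<noteq> 0 \<and> i + j \<le> m}"
    then obtain i j where p: "p = (i, j)" "s i \<noteq> 0" "r j \<noteq> 0" "i + j \<le> m"
      by blast
    then have "\<not> i < ns" "\<not> j < nr"
      using s r by auto
    then show "p \<in> {ns..m - nr} \<times> {nr..m - ns}"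
      using p by auto
  qed
  have "(\<Sum>p\<in>{(i, j). s i \<noteq> 0 \<and> r j \<noteq> 0 \<and> i + j \<le> m}.
      zcoeff \<sigma> \<delta> (s (fst p)) (snd p) (m - fst p) * r (snd p))
    = (\<Sum>p\<in>{ns..m - nr} \<times> {nr..m - ns}. zcoeff \<sigma> \<delta> (s (fst p)) (snd p) (m - fst p) * r (snd p))"
  proof (rule sum.mono_neutral_left[OF _ sub])
    show "\<forall>p\<in>{ns..m - nr} \<times> {nr..m - ns} - {(i, j). s i \<noteq> 0 \<and> r j \<noteq> 0 \<and> i + j \<le> m}.
        zcoeff \<sigma> \<delta> (s (fst p)) (snd p) (m - fst p) * r (snd p) = 0"
    proof
      fix p assume "p \<in> {ns..m - nr} \<times> {nr..m - ns} - {(i, j). s i \<noteq> 0 \<and> r j \<noteq> 0 \<and> i + j \<le> m}"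
      then obtain i j where "p = (i, j)" "s i = 0 \<or> r j = 0 \<or> m < i + j"
        by (cases p) (auto simp: not_le)
      then show "zcoeff \<sigma> \<delta> (s (fst p)) (snd p) (m - fst p) * r (snd p) = 0"
        using zcoeff_zero[OF \<sigma>\<delta>] zcoeff_below[OF \<sigma>\<delta>, of "m - i" j] by auto
    qed
  qed simp
  then show ?thesis
    by (simp add: skew_series_z_def)
qed

lemma skew_series_z_mult_const:
  assumes \<sigma>\<delta>: "ring_automorphism \<sigma>" "sigma_derivation \<sigma> \<delta>" and s: "s \<in> laurent_carrier"
  shows "s \<otimes>\<^bsub>skew_series_z \<sigma> \<delta>\<^esub> const_series c = (\<lambda>m. s m * c)"
proof
  fix m
  obtain ns where ns: "\<And>i. i < ns \<Longrightarrow> s i = 0"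
    using s unfolding laurent_carrier_def by blast
  have c: "\<And>i. i < 0 \<Longrightarrow> const_series c i = 0"
    by (simp add: const_series_def)
  have "zcoeff \<sigma> \<delta> (s (fst p)) (snd p) (m - fst p) * const_series c (snd p)
      = (if p = (m, 0) then s m * c else 0)" for p
    by (cases p) (auto simp: const_series_def zcoeff_def)
  then have "(s \<otimes>\<^bsub>skew_series_z \<sigma> \<delta>\<^esub> const_series c) m
      = (if (m, 0) \<in> {ns..m - 0} \<times> {0..m - ns} then s m * c else 0)"
    by (simp add: skew_series_z_mult_eq_sum[OF \<sigma>\<delta> ns c] sum.delta[OF finite_SigmaI])
  also have "\<dots> = s m * c"
    using ns by auto
  finally show "(s \<otimes>\<^bsub>skew_series_z \<sigma> \<delta>\<^esub> const_series c) m = s m * c" .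
qed

lemma skew_series_z_mult_closed:
  assumes "ring_automorphism \<sigma>" "sigma_derivation \<sigma> \<delta>" "f \<in> laurent_carrier" "g \<in> laurent_carrier"
  shows "f \<otimes>\<^bsub>skew_series_z \<sigma> \<delta>\<^esub> g \<in> laurent_carrier"
proof -
  obtain nf ng where f: "\<And>i. i < nf \<Longrightarrow> f i = 0" and g: "\<And>i. i < ng \<Longrightarrow> g i = 0"
    using assms(3,4) unfolding laurent_carrier_def by blast
  have "(f \<otimes>\<^bsub>skew_series_z \<sigma> \<delta>\<^esub> g) m = 0" if "m < nf + ng" for m
    using that by (simp add: skew_series_z_mult_eq_sum[OF assms(1,2) f g])
  then show ?thesis
    unfolding laurent_carrier_def by blast
qed

lemma skew_series_z_mult_diff:
  assumes \<sigma>\<delta>: "ring_automorphism \<sigma>" "sigma_derivation \<sigma> \<delta>"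
    and "f \<in> laurent_carrier" "g \<in> laurent_carrier" "h \<in> laurent_carrier"
  shows "f \<otimes>\<^bsub>skew_series_z \<sigma> \<delta>\<^esub> (\<lambda>i. g i - h i)
    = (\<lambda>m. (f \<otimes>\<^bsub>skew_series_z \<sigma> \<delta>\<^esub> g) m - (f \<otimes>\<^bsub>skew_series_z \<sigma> \<delta>\<^esub> h) m)"
proof
  fix m
  obtain nf ng nh where f: "\<And>i. i < nf \<Longrightarrow> f i = 0"
    and g: "\<And>i. i < ng \<Longrightarrow> g i = 0" and h: "\<And>i. i < nh \<Longrightarrow> h i = 0"
    using assms(3-5) unfolding laurent_carrier_def by blast
  let ?n = "min ng nh"
  have g': "\<And>i. i < ?n \<Longrightarrow> g i = 0" and h': "\<And>i. i < ?n \<Longrightarrow> h i = 0"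
    and gh: "\<And>i. i < ?n \<Longrightarrow> g i - h i = 0"
    using g h by simp_all
  let ?B = "{nf..m - ?n} \<times> {?n..m - nf}" and ?z = "\<lambda>p. zcoeff \<sigma> \<delta> (f (fst p)) (snd p) (m - fst p)"
  have "(f \<otimes>\<^bsub>skew_series_z \<sigma> \<delta>\<^esub> (\<lambda>i. g i - h i)) m = (\<Sum>p\<in>?B. ?z p * (g (snd p) - h (snd p)))"
    by (rule skew_series_z_mult_eq_sum[OF \<sigma>\<delta> f gh])
  also have "\<dots> = (\<Sum>p\<in>?B. ?z p * g (snd p)) - (\<Sum>p\<in>?B. ?z p * h (snd p))"
    by (simp add: sum_subtractf right_diff_distrib)
  finally show "(f \<otimes>\<^bsub>skew_series_z \<sigma> \<delta>\<^esub> (\<lambda>i. g i - h i)) m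
      = (f \<otimes>\<^bsub>skew_series_z \<sigma> \<delta>\<^esub> g) m - (f \<otimes>\<^bsub>skew_series_z \<sigma> \<delta>\<^esub> h) m"
    by (simp only: skew_series_z_mult_eq_sum[OF \<sigma>\<delta> f g'] skew_series_z_mult_eq_sum[OF \<sigma>\<delta> f h'])
qed

lemma skew_series_z_lorder_mult:
  assumes \<sigma>\<delta>: "ring_automorphism \<sigma>" "sigma_derivation \<sigma> \<delta>"
    and f: "f \<in> laurent_carrier" "f \<noteq> (\<lambda>i. 0)" and g: "g \<in> laurent_carrier" "g \<noteq> (\<lambda>i. 0)"
  shows "f \<otimes>\<^bsub>skew_series_z \<sigma> \<delta>\<^esub> g \<noteq> (\<lambda>i. 0)"
    and "lorder (f \<otimes>\<^bsub>skew_series_z \<sigma> \<delta>\<^esub> g) = lorder f + lorder g"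
proof -
  let ?a = "lorder f" and ?b = "lorder g"
  have prod: "(f \<otimes>\<^bsub>skew_series_z \<sigma> \<delta>\<^esub> g) m = (\<Sum>p\<in>{?a..m - ?b} \<times> {?b..m - ?a}.
      zcoeff \<sigma> \<delta> (f (fst p)) (snd p) (m - fst p) * g (snd p))" for m
    using skew_series_z_mult_eq_sum[OF \<sigma>\<delta>] lorder(2)[OF f] lorder(2)[OF g] by blast
  have lead: "(f \<otimes>\<^bsub>skew_series_z \<sigma> \<delta>\<^esub> g) (?a + ?b) \<noteq> 0"
    using lorder(1)[OF f] lorder(1)[OF g] by (simp add: prod zcoeff_diag[OF \<sigma>\<delta>])
  have below: "(f \<otimes>\<^bsub>skew_series_z \<sigma> \<delta>\<^esub> g) m = 0" if "m < ?a + ?b" for m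
    using that by (simp add: prod)
  show "f \<otimes>\<^bsub>skew_series_z \<sigma> \<delta>\<^esub> g \<noteq> (\<lambda>i. 0)"
    using lead by auto
  show "lorder (f \<otimes>\<^bsub>skew_series_z \<sigma> \<delta>\<^esub> g) = ?a + ?b"
    using lead below by (rule lorder_eqI)
qed

lemma skew_series_z_valued:
  fixes \<sigma> \<delta> :: "'a::division_ring \<Rightarrow> 'a"
  assumes \<sigma>\<delta>: "ring_automorphism \<sigma>" "sigma_derivation \<sigma> \<delta>"
  shows "valued_algebra (skew_series_z \<sigma> \<delta>) lorder (\<lambda>a f. f \<otimes>\<^bsub>skew_series_z \<sigma> \<delta>\<^esub> const_series a)"
proof -
  let ?Z = "skew_series_z \<sigma> \<delta>"
  interpret ultrametric_group ?Z lorder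
    by (rule pointwise_laurent_ultrametric[OF skew_series_z_pointwise])
  have Z: "carrier ?Z = laurent_carrier" "\<zero>\<^bsub>?Z\<^esub> = (\<lambda>i. 0)" "\<one>\<^bsub>?Z\<^esub> = (\<lambda>i. if i = 0 then 1 else 0)"
    by (simp_all add: skew_series_z_def)
  have "valued_structure ?Z lorder"
  proof unfold_locales
    fix x y z assume "x \<in> carrier ?Z" "y \<in> carrier ?Z" "z \<in> carrier ?Z"
    then show "x \<otimes>\<^bsub>?Z\<^esub> (y \<ominus>\<^bsub>?Z\<^esub> z) = x \<otimes>\<^bsub>?Z\<^esub> y \<ominus>\<^bsub>?Z\<^esub> x \<otimes>\<^bsub>?Z\<^esub> z"
      using skew_series_z_mult_diff[OF \<sigma>\<delta>] skew_series_z_mult_closed[OF \<sigma>\<delta>]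
      by (simp add: pointwise_laurent_minus[OF skew_series_z_pointwise] Z)
  qed (use skew_series_z_mult_closed[OF \<sigma>\<delta>] skew_series_z_lorder_mult[OF \<sigma>\<delta>] in \<open>auto simp: Z fun_eq_iff\<close>)
  moreover have "scalar_action ?Z lorder (\<lambda>a f. f \<otimes>\<^bsub>?Z\<^esub> const_series a)"
  proof (rule pointwise_laurent_scalar_action[OF skew_series_z_pointwise, where \<mu> = "\<lambda>a x. x * a"])
    show "\<exists>c. \<forall>x. x * b * a = x * c" for a b :: 'a
      by (metis mult.assoc)
    show "x * a * inverse a = x" if "a \<noteq> 0" for a x :: 'a
      using that by (simp add: mult.assoc)
  qed (auto simp: skew_series_z_mult_const[OF \<sigma>\<delta>] Z algebra_simps)
  ultimately show ?thesis
    by (simp add: valued_algebra_def)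
qed

theorem regular_ext_skew_series_z:
  fixes \<sigma> \<delta> :: "'a::division_ring \<Rightarrow> 'a"
  assumes "ring_automorphism \<sigma>" "sigma_derivation \<sigma> \<delta>"
  shows "regular_ext (skew_series_z \<sigma> \<delta>) const_series"
proof -
  interpret valued_algebra "skew_series_z \<sigma> \<delta>" lorder "\<lambda>a f. f \<otimes>\<^bsub>skew_series_z \<sigma> \<delta>\<^esub> const_series a"
    using assms by (rule skew_series_z_valued)
  show ?thesis
  proof (rule regular_extI)
    show "const_series a \<in> carrier (skew_series_z \<sigma> \<delta>)" for a
      by (simp add: laurent_const skew_series_z_def)
  qed (auto simp: algebraic_over_def fin_dim_right_iff_span
      intro: pointwise_laurent_nonzero_value[OF skew_series_z_pointwise])
qed

section \<open>Ore polynomials\<close>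

definition pdeg :: "(nat \<Rightarrow> 'a::zero) \<Rightarrow> nat" where
  "pdeg f = Max {i. f i \<noteq> 0}"

lemma pdeg:
  assumes "finite {i. f i \<noteq> 0}" "f \<noteq> (\<lambda>i. 0)"
  shows "f (pdeg f) \<noteq> 0" and "pdeg f < i \<Longrightarrow> f i = 0"
proof -
  have "{i. f i \<noteq> 0} \<noteq> {}"
    using assms(2) by auto
  then show "f (pdeg f) \<noteq> 0"
    unfolding pdeg_def using Max_in[OF assms(1)] by blast
  show "f i = 0" if "pdeg f < i"
    using that Max_ge[OF assms(1), of i] unfolding pdeg_def by force
qed

lemma pdeg_eqI:
  assumes "finite {i. f i \<noteq> 0}" "f d \<noteq> 0" "\<And>i. d < i \<Longrightarrow> f i = 0"
  shows "pdeg f = d"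
  unfolding pdeg_def using assms by (intro Max_eqI) (auto simp: not_less[symmetric])

lemma pdeg_diff:
  fixes u v :: "nat \<Rightarrow> 'a::ab_group_add"
  assumes u: "finite {i. u i \<noteq> 0}" "u \<noteq> (\<lambda>i. 0)" and v: "finite {i. v i \<noteq> 0}" "v \<noteq> (\<lambda>i. 0)"
    and "pdeg u \<noteq> pdeg v"
  shows "(\<lambda>i. u i - v i) \<noteq> (\<lambda>i. 0)" and "pdeg (\<lambda>i. u i - v i) = max (pdeg u) (pdeg v)"
proof -
  let ?d = "max (pdeg u) (pdeg v)"
  note du = pdeg[OF u] and dv = pdeg[OF v]
  have fin: "finite {i. u i - v i \<noteq> 0}"
    by (rule finite_subset[of _ "{i. u i \<noteq> 0} \<union> {i. v i \<noteq> 0}"]) (use u v in auto)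
  have top: "u ?d - v ?d \<noteq> 0"
    using du dv \<open>pdeg u \<noteq> pdeg v\<close> by (cases "pdeg u < pdeg v") (auto simp: max_def)
  then show "(\<lambda>i. u i - v i) \<noteq> (\<lambda>i. 0)"
    by (auto simp: fun_eq_iff)
  show "pdeg (\<lambda>i. u i - v i) = ?d"
    using fin top du(2) dv(2) by (intro pdeg_eqI) auto
qed

lemma tcoeff_above:
  assumes "ring_automorphism \<sigma>" "sigma_derivation \<sigma> \<delta>"
  shows "i < l \<Longrightarrow> tcoeff \<sigma> \<delta> i b l = 0"
  by (induction i arbitrary: l)
    (simp_all add: sigma_derivation_zero[OF assms(2)] ring_automorphism_simps[OF assms(1)])

lemma tcoeff_diag:
  assumes "ring_automorphism \<sigma>" "sigma_derivation \<sigma> \<delta>"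
  shows "tcoeff \<sigma> \<delta> i b i = (\<sigma> ^^ i) b"
  by (induction i) (simp_all add: tcoeff_above[OF assms] sigma_derivation_zero[OF assms(2)])

lemma ore_poly_carrier: "carrier (ore_poly \<sigma> \<delta>) = {f. finite {i. f i \<noteq> 0}}"
  by (simp add: ore_poly_def)

lemma ore_poly_mult:
  "f \<otimes>\<^bsub>ore_poly \<sigma> \<delta>\<^esub> g = (\<lambda>m. \<Sum>p\<in>{(i, j). f i \<noteq> 0 \<and> g j \<noteq> 0 \<and> j \<le> m}.
     f (fst p) * tcoeff \<sigma> \<delta> (fst p) (g (snd p)) (m - snd p))"
  by (simp add: ore_poly_def)

lemma ore_poly_mult_coeff_nonzero:
  assumes "ring_automorphism \<sigma>" "sigma_derivation \<sigma> \<delta>" "(f \<otimes>\<^bsub>ore_poly \<sigma> \<delta>\<^esub> g) m \<noteq> 0"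
  shows "\<exists>i j. f i \<noteq> 0 \<and> g j \<noteq> 0 \<and> m \<le> i + j"
proof (rule ccontr)
  assume none: "\<not> (\<exists>i j. f i \<noteq> 0 \<and> g j \<noteq> 0 \<and> m \<le> i + j)"
  have "f i * tcoeff \<sigma> \<delta> i (g j) (m - j) = 0" if "f i \<noteq> 0" "g j \<noteq> 0" "j \<le> m" for i j
  proof -
    have "\<not> m \<le> i + j"
      using none that by blast
    then have "i < m - j"
      by linarith
    then show ?thesis
      using tcoeff_above[OF assms(1,2)] by simp
  qed
  then have "(f \<otimes>\<^bsub>ore_poly \<sigma> \<delta>\<^esub> g) m = 0"
    unfolding ore_poly_mult by (auto intro: sum.neutral)
  then show False
    using assms(3) by contradiction
qed

lemma ore_poly_mult_closed:
  assumes "ring_automorphism \<sigma>" "sigma_derivation \<sigma> \<delta>"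
    and "f \<in> carrier (ore_poly \<sigma> \<delta>)" "g \<in> carrier (ore_poly \<sigma> \<delta>)"
  shows "f \<otimes>\<^bsub>ore_poly \<sigma> \<delta>\<^esub> g \<in> carrier (ore_poly \<sigma> \<delta>)"
proof -
  have f: "finite {i. f i \<noteq> 0}" and g: "finite {i. g i \<noteq> 0}"
    using assms(3,4) by (simp_all add: ore_poly_carrier)
  have "{m. (f \<otimes>\<^bsub>ore_poly \<sigma> \<delta>\<^esub> g) m \<noteq> 0} \<subseteq> {..Max {i. f i \<noteq> 0} + Max {i. g i \<noteq> 0}}"
  proof
    fix m assume "m \<in> {m. (f \<otimes>\<^bsub>ore_poly \<sigma> \<delta>\<^esub> g) m \<noteq> 0}"
    then obtain i j where "f i \<noteq> 0" "g j \<noteq> 0" "m \<le> i + j"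
      using ore_poly_mult_coeff_nonzero[OF assms(1,2)] by blast
    then show "m \<in> {..Max {i. f i \<noteq> 0} + Max {i. g i \<noteq> 0}}"
      using Max_ge[OF f, of i] Max_ge[OF g, of j] by simp
  qed
  then show ?thesis
    unfolding ore_poly_carrier using finite_subset by blast
qed

lemma ore_poly_mult_pdeg:
  assumes \<sigma>\<delta>: "ring_automorphism \<sigma>" "sigma_derivation \<sigma> \<delta>"
    and f: "f \<in> carrier (ore_poly \<sigma> \<delta>)" "f \<noteq> (\<lambda>i. 0)" and g: "g \<in> carrier (ore_poly \<sigma> \<delta>)" "g \<noteq> (\<lambda>i. 0)"
  shows "f \<otimes>\<^bsub>ore_poly \<sigma> \<delta>\<^esub> g \<noteq> (\<lambda>i. 0)"
    and "pdeg (f \<otimes>\<^bsub>ore_poly \<sigma> \<delta>\<^esub> g) = pdeg f + pdeg g"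
proof -
  let ?fg = "f \<otimes>\<^bsub>ore_poly \<sigma> \<delta>\<^esub> g" and ?M = "pdeg f + pdeg g"
  have ff: "finite {i. f i \<noteq> 0}" and fg: "finite {i. g i \<noteq> 0}"
    using f(1) g(1) by (simp_all add: ore_poly_carrier)
  note df = pdeg[OF ff f(2)] and dg = pdeg[OF fg g(2)]
  let ?A = "{(i, j). f i \<noteq> 0 \<and> g j \<noteq> 0 \<and> j \<le> ?M}"
  have "finite ?A"
    by (rule finite_subset[of _ "{i. f i \<noteq> 0} \<times> {i. g i \<noteq> 0}"]) (use ff fg in auto)
  have "f (fst p) * tcoeff \<sigma> \<delta> (fst p) (g (snd p)) (?M - snd p)
      = (if p = (pdeg f, pdeg g) then f (pdeg f) * (\<sigma> ^^ pdeg f) (g (pdeg g)) else 0)" if "p \<in> ?A" for p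
  proof -
    obtain i j where p: "p = (i, j)" "f i \<noteq> 0" "g j \<noteq> 0" "j \<le> ?M"
      using \<open>p \<in> ?A\<close> by blast
    then have "i \<le> pdeg f" "j \<le> pdeg g"
      using df(2) dg(2) not_less by blast+
    then show ?thesis
      using p tcoeff_above[OF \<sigma>\<delta>, of i "?M - j"] by (auto simp: tcoeff_diag[OF \<sigma>\<delta>])
  qed
  then have "?fg ?M = (\<Sum>p\<in>?A. if p = (pdeg f, pdeg g) then f (pdeg f) * (\<sigma> ^^ pdeg f) (g (pdeg g)) else 0)"
    unfolding ore_poly_mult by (rule sum.cong[OF refl])
  also have "\<dots> = (if (pdeg f, pdeg g) \<in> ?A then f (pdeg f) * (\<sigma> ^^ pdeg f) (g (pdeg g)) else 0)"
    by (rule sum.delta[OF \<open>finite ?A\<close>])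
  also have "\<dots> = f (pdeg f) * (\<sigma> ^^ pdeg f) (g (pdeg g))"
    using df(1) dg(1) by simp
  finally have lead: "?fg ?M \<noteq> 0"
    using df(1) dg(1) ring_automorphism_simps(3)[OF ring_automorphism_funpow[OF \<sigma>\<delta>(1)]] by simp
  have above: "?fg m = 0" if "?M < m" for m
    using that ore_poly_mult_coeff_nonzero[OF \<sigma>\<delta>, of f g m] df(2) dg(2) by (meson add_le_mono leD le_trans not_le)
  show "?fg \<noteq> (\<lambda>i. 0)"
    using lead by auto
  show "pdeg ?fg = ?M"
    using ore_poly_mult_closed[OF \<sigma>\<delta> f(1) g(1)] lead above by (intro pdeg_eqI) (simp_all add: ore_poly_carrier)
qed

lemma ore_poly_const_mult:
  assumes "f \<in> carrier (ore_poly \<sigma> \<delta>)"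
  shows "const_poly c \<otimes>\<^bsub>ore_poly \<sigma> \<delta>\<^esub> f = (\<lambda>m. c * f m)"
proof
  fix m
  let ?A = "{(i, j). const_poly c i \<noteq> 0 \<and> f j \<noteq> 0 \<and> j \<le> m}"
  have "finite ?A"
    by (rule finite_subset[of _ "{0} \<times> {i. f i \<noteq> 0}"])
      (use assms in \<open>auto simp: const_poly_def ore_poly_carrier\<close>)
  have "const_poly c (fst p) * tcoeff \<sigma> \<delta> (fst p) (f (snd p)) (m - snd p)
      = (if p = (0, m) then c * f m else 0)" if "p \<in> ?A" for p
    using that by (auto simp: const_poly_def)
  then have "(const_poly c \<otimes>\<^bsub>ore_poly \<sigma> \<delta>\<^esub> f) m = (\<Sum>p\<in>?A. if p = (0, m) then c * f m else 0)"
    unfolding ore_poly_mult by (rule sum.cong[OF refl])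
  also have "\<dots> = (if (0, m) \<in> ?A then c * f m else 0)"
    by (rule sum.delta[OF \<open>finite ?A\<close>])
  finally show "(const_poly c \<otimes>\<^bsub>ore_poly \<sigma> \<delta>\<^esub> f) m = c * f m"
    by (auto simp: const_poly_def)
qed

lemma ore_poly_zero_closed: "(\<lambda>i. 0) \<in> carrier (ore_poly \<sigma> \<delta>)"
  by (simp add: ore_poly_carrier)

lemma ore_poly_diff_closed:
  "p \<in> carrier (ore_poly \<sigma> \<delta>) \<Longrightarrow> q \<in> carrier (ore_poly \<sigma> \<delta>) \<Longrightarrow> (\<lambda>i. p i - q i) \<in> carrier (ore_poly \<sigma> \<delta>)"
  by (auto simp: ore_poly_carrier intro: finite_subset[of _ "{i. p i \<noteq> 0} \<union> {i. q i \<noteq> 0}"])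

lemma ore_poly_scale_closed: "p \<in> carrier (ore_poly \<sigma> \<delta>) \<Longrightarrow> (\<lambda>i. c * p i) \<in> carrier (ore_poly \<sigma> \<delta>)"
  by (auto simp: ore_poly_carrier intro: finite_subset[of _ "{i. p i \<noteq> 0}"])

lemma ore_poly_const_closed: "const_poly c \<in> carrier (ore_poly \<sigma> \<delta>)"
  by (auto simp: ore_poly_carrier const_poly_def intro: finite_subset[of _ "{0}"])

section \<open>The skew field of fractions k(t,sigma,delta)\<close>

lemma (in ring) l_diff_distr:
  "\<lbrakk>x \<in> carrier R; y \<in> carrier R; z \<in> carrier R\<rbrakk> \<Longrightarrow> (x \<ominus> y) \<otimes> z = x \<otimes> z \<ominus> y \<otimes> z"
  by (simp add: minus_eq l_distr l_minus)

locale skew_fraction_field =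
  fixes \<sigma> \<delta> :: "'a::division_ring \<Rightarrow> 'a" and D :: "'b ring" (structure) and \<phi> :: "(nat \<Rightarrow> 'a) \<Rightarrow> 'b"
  assumes automorphism: "ring_automorphism \<sigma>" and derivation: "sigma_derivation \<sigma> \<delta>"
    and fraction_field: "is_skew_fraction_field \<sigma> \<delta> D \<phi>"
begin

abbreviation P :: "(nat \<Rightarrow> 'a) ring" where "P \<equiv> ore_poly \<sigma> \<delta>"

sublocale ring D
  using fraction_field by (simp add: is_skew_fraction_field_def division_ring_alg_def)

lemma one_not_zero: "\<one> \<noteq> \<zero>"
  and nonzero_Units: "x \<in> carrier D \<Longrightarrow> x \<noteq> \<zero> \<Longrightarrow> x \<in> Units D"
  and phi_hom: "\<phi> \<in> ring_hom P D"
  and phi_inj: "inj_on \<phi> (carrier P)"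
  and fractions: "x \<in> carrier D \<Longrightarrow>
    \<exists>p\<in>carrier P. \<exists>q\<in>carrier P. q \<noteq> (\<lambda>i. 0) \<and> x = \<phi> p \<otimes> inv (\<phi> q)"
  using fraction_field
  by (simp_all add: is_skew_fraction_field_def division_ring_alg_def ore_poly_def)

lemma mult_eq_zero_Units: "x \<in> carrier D \<Longrightarrow> u \<in> Units D \<Longrightarrow> x \<otimes> u = \<zero> \<longleftrightarrow> x = \<zero>"
  by (metis Units_closed Units_inv_closed Units_r_inv m_assoc l_null r_one)

lemmas ore_poly_closed = ore_poly_zero_closed[of \<sigma> \<delta>] ore_poly_diff_closed[where \<sigma> = \<sigma> and \<delta> = \<delta>]
  ore_poly_scale_closed[where \<sigma> = \<sigma> and \<delta> = \<delta>] ore_poly_const_closed[where \<sigma> = \<sigma> and \<delta> = \<delta>]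

lemma phi_closed: "p \<in> carrier P \<Longrightarrow> \<phi> p \<in> carrier D"
  by (rule ring_hom_closed[OF phi_hom])

lemma phi_mult: "p \<in> carrier P \<Longrightarrow> q \<in> carrier P \<Longrightarrow> \<phi> (p \<otimes>\<^bsub>P\<^esub> q) = \<phi> p \<otimes> \<phi> q"
  by (rule ring_hom_mult[OF phi_hom])

lemma phi_add: "p \<in> carrier P \<Longrightarrow> q \<in> carrier P \<Longrightarrow> \<phi> (\<lambda>i. p i + q i) = \<phi> p \<oplus> \<phi> q"
  using ring_hom_add[OF phi_hom] by (simp add: ore_poly_def)

lemma phi_diff:
  assumes "p \<in> carrier P" "q \<in> carrier P"
  shows "\<phi> (\<lambda>i. p i - q i) = \<phi> p \<ominus> \<phi> q"
proof -
  have d: "(\<lambda>i. p i - q i) \<in> carrier P"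
    using assms by (rule ore_poly_diff_closed)
  have "\<phi> p = \<phi> (\<lambda>i. p i - q i) \<oplus> \<phi> q"
    using phi_add[OF d assms(2)] by simp
  then show ?thesis
    using assms d phi_closed by (simp add: minus_eq add.inv_solve_right)
qed

lemma phi_eq_zero_iff: "p \<in> carrier P \<Longrightarrow> \<phi> p = \<zero> \<longleftrightarrow> p = (\<lambda>i. 0)"
proof -
  have "\<phi> (\<lambda>i. 0) = \<zero>"
    using phi_diff[OF ore_poly_zero_closed ore_poly_zero_closed] phi_closed[OF ore_poly_zero_closed]
    by (simp add: minus_eq r_neg)
  then show "p \<in> carrier P \<Longrightarrow> \<phi> p = \<zero> \<longleftrightarrow> p = (\<lambda>i. 0)"
    using phi_inj ore_poly_closed(1) by (metis inj_onD)
qed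

definition represents :: "'b \<Rightarrow> (nat \<Rightarrow> 'a) \<Rightarrow> (nat \<Rightarrow> 'a) \<Rightarrow> bool" where
  "represents x p q \<longleftrightarrow>
     x \<in> carrier D \<and> p \<in> carrier P \<and> q \<in> carrier P \<and> q \<noteq> (\<lambda>i. 0) \<and> x \<otimes> \<phi> q = \<phi> p"

lemma represents_exists:
  assumes "x \<in> carrier D"
  shows "\<exists>p q. represents x p q"
proof -
  obtain p q where pq: "p \<in> carrier P" "q \<in> carrier P" "q \<noteq> (\<lambda>i. 0)" "x = \<phi> p \<otimes> inv (\<phi> q)"
    using fractions[OF assms] by blast
  have "\<phi> q \<in> Units D"
    using pq nonzero_Units phi_closed phi_eq_zero_iff by blast
  then have "x \<otimes> \<phi> q = \<phi> p"
    using pq phi_closed by (simp add: m_assoc)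
  then show ?thesis
    using assms pq unfolding represents_def by blast
qed

lemma represents_zero_iff:
  assumes "represents x p q"
  shows "x = \<zero> \<longleftrightarrow> p = (\<lambda>i. 0)"
proof -
  have "\<phi> q \<in> Units D"
    using assms nonzero_Units phi_closed phi_eq_zero_iff unfolding represents_def by blast
  then show ?thesis
    using assms mult_eq_zero_Units phi_eq_zero_iff unfolding represents_def by metis
qed

lemma represents_mult:
  assumes "represents x p q" "a \<in> carrier P" "a \<noteq> (\<lambda>i. 0)"
  shows "represents x (p \<otimes>\<^bsub>P\<^esub> a) (q \<otimes>\<^bsub>P\<^esub> a)"
proof -
  have x: "x \<in> carrier D" and p: "p \<in> carrier P" and q: "q \<in> carrier P" "q \<noteq> (\<lambda>i. 0)"
    and e: "x \<otimes> \<phi> q = \<phi> p"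
    using assms(1) unfolding represents_def by auto
  have "x \<otimes> \<phi> (q \<otimes>\<^bsub>P\<^esub> a) = \<phi> (p \<otimes>\<^bsub>P\<^esub> a)"
    using x p q(1) assms(2) e phi_closed by (simp add: phi_mult m_assoc[symmetric])
  then show ?thesis
    unfolding represents_def
    using x p q assms(2,3) ore_poly_mult_closed[OF automorphism derivation]
      ore_poly_mult_pdeg(1)[OF automorphism derivation]
    by blast
qed

lemma represents_same_denominator: "represents x p q \<Longrightarrow> represents x p' q \<Longrightarrow> p = p'"
  unfolding represents_def using phi_inj by (metis inj_onD)

text \<open>The Ore condition for k[t,sigma,delta] is inherited from its field of fractions:
  a common right multiple of q1 and q2 comes from a representation of inv (phi q1) * phi q2.\<close>

lemma ore_condition:
  assumes q1: "q1 \<in> carrier P" "q1 \<noteq> (\<lambda>i. 0)" and q2: "q2 \<in> carrier P" "q2 \<noteq> (\<lambda>i. 0)"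
  shows "\<exists>a b. a \<in> carrier P \<and> b \<in> carrier P \<and> a \<noteq> (\<lambda>i. 0) \<and> b \<noteq> (\<lambda>i. 0)
    \<and> q1 \<otimes>\<^bsub>P\<^esub> a = q2 \<otimes>\<^bsub>P\<^esub> b"
proof -
  have u1: "\<phi> q1 \<in> Units D" and c2: "\<phi> q2 \<in> carrier D" "\<phi> q2 \<noteq> \<zero>"
    using q1 q2 nonzero_Units phi_closed phi_eq_zero_iff by auto
  define y where "y = inv (\<phi> q1) \<otimes> \<phi> q2"
  have y: "y \<in> carrier D" "\<phi> q1 \<otimes> y = \<phi> q2"
    unfolding y_def using u1 c2 by (simp_all add: m_assoc[symmetric] Units_closed)
  obtain a b where ab: "represents y a b"
    using represents_exists[OF y(1)] by blast
  then have a: "a \<in> carrier P" and b: "b \<in> carrier P" "b \<noteq> (\<lambda>i. 0)" and e: "y \<otimes> \<phi> b = \<phi> a"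
    unfolding represents_def by auto
  have "y \<noteq> \<zero>"
    using y(2) c2(2) u1 by auto
  then have "a \<noteq> (\<lambda>i. 0)"
    using represents_zero_iff[OF ab] by blast
  have "\<phi> (q1 \<otimes>\<^bsub>P\<^esub> a) = \<phi> (q2 \<otimes>\<^bsub>P\<^esub> b)"
    using q1 q2 a b y phi_closed by (simp add: phi_mult e[symmetric] m_assoc[symmetric])
  then have "q1 \<otimes>\<^bsub>P\<^esub> a = q2 \<otimes>\<^bsub>P\<^esub> b"
    using phi_inj ore_poly_mult_closed[OF automorphism derivation] q1 q2 a b by (meson inj_onD)
  then show ?thesis
    using a b \<open>a \<noteq> (\<lambda>i. 0)\<close> by blast
qed

lemma pdeg_mult:
  "p \<in> carrier P \<Longrightarrow> q \<in> carrier P \<Longrightarrow> p \<noteq> (\<lambda>i. 0) \<Longrightarrow> q \<noteq> (\<lambda>i. 0) \<Longrightarrow>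
    pdeg (p \<otimes>\<^bsub>P\<^esub> q) = pdeg p + pdeg q"
  by (rule ore_poly_mult_pdeg(2)[OF automorphism derivation])

lemma represents_degree_unique:
  assumes "represents x p q" "represents x p' q'" "x \<noteq> \<zero>"
  shows "int (pdeg p) - int (pdeg q) = int (pdeg p') - int (pdeg q')"
proof -
  have q: "q \<in> carrier P" "q \<noteq> (\<lambda>i. 0)" "q' \<in> carrier P" "q' \<noteq> (\<lambda>i. 0)"
    and p: "p \<in> carrier P" "p' \<in> carrier P"
    using assms(1,2) unfolding represents_def by auto
  obtain a b where ab: "a \<in> carrier P" "b \<in> carrier P" "a \<noteq> (\<lambda>i. 0)" "b \<noteq> (\<lambda>i. 0)"
    and qa: "q \<otimes>\<^bsub>P\<^esub> a = q' \<otimes>\<^bsub>P\<^esub> b"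
    using ore_condition[OF q] by blast
  have "represents x (p' \<otimes>\<^bsub>P\<^esub> b) (q \<otimes>\<^bsub>P\<^esub> a)"
    using represents_mult[OF assms(2) ab(2,4)] qa by simp
  then have pa: "p \<otimes>\<^bsub>P\<^esub> a = p' \<otimes>\<^bsub>P\<^esub> b"
    using represents_same_denominator represents_mult[OF assms(1) ab(1,3)] by blast
  have "p \<noteq> (\<lambda>i. 0)" "p' \<noteq> (\<lambda>i. 0)"
    using represents_zero_iff assms by blast+
  then show ?thesis
    using arg_cong[OF pa, of pdeg] arg_cong[OF qa, of pdeg] p q ab by (simp add: pdeg_mult)
qed

definition dval :: "'b \<Rightarrow> int" where
  "dval x = (SOME d. \<exists>p q. represents x p q \<and> d = int (pdeg p) - int (pdeg q))"

lemma dval_eq: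
  assumes "represents x p q" "x \<noteq> \<zero>"
  shows "dval x = int (pdeg p) - int (pdeg q)"
proof -
  have "\<exists>p q. represents x p q \<and> dval x = int (pdeg p) - int (pdeg q)"
    unfolding dval_def by (rule someI_ex) (use assms(1) in blast)
  then show ?thesis
    using represents_degree_unique assms by metis
qed

lemma dval_mult:
  assumes x: "x \<in> carrier D" "x \<noteq> \<zero>" and y: "y \<in> carrier D" "y \<noteq> \<zero>"
  shows "dval (x \<otimes> y) = dval x + dval y"
proof -
  obtain p1 q1 p2 q2 where R1: "represents x p1 q1" and R2: "represents y p2 q2"
    using represents_exists x(1) y(1) by meson
  then have pq: "p1 \<in> carrier P" "q1 \<in> carrier P" "q1 \<noteq> (\<lambda>i. 0)" "x \<otimes> \<phi> q1 = \<phi> p1"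
    "p2 \<in> carrier P" "q2 \<in> carrier P" "q2 \<noteq> (\<lambda>i. 0)" "y \<otimes> \<phi> q2 = \<phi> p2"
    unfolding represents_def by auto
  have p_nonzero: "p1 \<noteq> (\<lambda>i. 0)" "p2 \<noteq> (\<lambda>i. 0)"
    using represents_zero_iff R1 R2 x y by blast+
  obtain a b where ab: "a \<in> carrier P" "b \<in> carrier P" "a \<noteq> (\<lambda>i. 0)" "b \<noteq> (\<lambda>i. 0)"
    and qa: "q1 \<otimes>\<^bsub>P\<^esub> a = p2 \<otimes>\<^bsub>P\<^esub> b"
    using ore_condition[OF pq(2,3) pq(5) p_nonzero(2)] by blast
  have "(x \<otimes> y) \<otimes> \<phi> (q2 \<otimes>\<^bsub>P\<^esub> b) = x \<otimes> ((y \<otimes> \<phi> q2) \<otimes> \<phi> b)"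
    using x(1) y(1) pq(6) ab(2) phi_closed by (simp add: phi_mult m_assoc)
  also have "\<dots> = x \<otimes> \<phi> (q1 \<otimes>\<^bsub>P\<^esub> a)"
    using pq(5,8) ab(2) by (simp add: phi_mult qa)
  also have "\<dots> = (x \<otimes> \<phi> q1) \<otimes> \<phi> a"
    using x(1) pq(2) ab(1) phi_closed by (simp add: phi_mult m_assoc)
  also have "\<dots> = \<phi> (p1 \<otimes>\<^bsub>P\<^esub> a)"
    using pq(1,4) ab(1) by (simp add: phi_mult)
  finally have "represents (x \<otimes> y) (p1 \<otimes>\<^bsub>P\<^esub> a) (q2 \<otimes>\<^bsub>P\<^esub> b)"
    unfolding represents_def
    using x y pq ab ore_poly_mult_closed[OF automorphism derivation] ore_poly_mult_pdeg(1)[OF automorphism derivation]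
    by auto
  moreover have "x \<otimes> y \<noteq> \<zero>"
    using x y nonzero_Units mult_eq_zero_Units by blast
  ultimately have "dval (x \<otimes> y) = int (pdeg (p1 \<otimes>\<^bsub>P\<^esub> a)) - int (pdeg (q2 \<otimes>\<^bsub>P\<^esub> b))"
    by (rule dval_eq)
  then show ?thesis
    using dval_eq[OF R1 x(2)] dval_eq[OF R2 y(2)] arg_cong[OF qa, of pdeg] pq ab p_nonzero
    by (simp add: pdeg_mult)
qed

lemma dval_diff:
  assumes x: "x \<in> carrier D" "x \<noteq> \<zero>" and y: "y \<in> carrier D" "y \<noteq> \<zero>" and "dval x \<noteq> dval y"
  shows "dval (x \<ominus> y) \<in> {dval x, dval y}"
proof -
  obtain p1 q1 p2 q2 where R1: "represents x p1 q1" and R2: "represents y p2 q2"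
    using represents_exists x(1) y(1) by meson
  then have q: "q1 \<in> carrier P" "q1 \<noteq> (\<lambda>i. 0)" "q2 \<in> carrier P" "q2 \<noteq> (\<lambda>i. 0)"
    unfolding represents_def by auto
  obtain a b where ab: "a \<in> carrier P" "b \<in> carrier P" "a \<noteq> (\<lambda>i. 0)" "b \<noteq> (\<lambda>i. 0)"
    and qa: "q1 \<otimes>\<^bsub>P\<^esub> a = q2 \<otimes>\<^bsub>P\<^esub> b"
    using ore_condition[OF q] by blast
  define Q u v where "Q = q1 \<otimes>\<^bsub>P\<^esub> a" and "u = p1 \<otimes>\<^bsub>P\<^esub> a" and "v = p2 \<otimes>\<^bsub>P\<^esub> b"
  have Ru: "represents x u Q" and Rv: "represents y v Q"
    unfolding Q_def u_def v_def using represents_mult R1 R2 ab qa by metis+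
  then have uvQ: "u \<in> carrier P" "v \<in> carrier P" "Q \<in> carrier P" "Q \<noteq> (\<lambda>i. 0)"
    "x \<otimes> \<phi> Q = \<phi> u" "y \<otimes> \<phi> Q = \<phi> v"
    unfolding represents_def by auto
  have uv: "u \<noteq> (\<lambda>i. 0)" "v \<noteq> (\<lambda>i. 0)" "finite {i. u i \<noteq> 0}" "finite {i. v i \<noteq> 0}"
    using represents_zero_iff Ru Rv x y uvQ(1,2) by (auto simp: ore_poly_carrier)
  have vals: "dval x = int (pdeg u) - int (pdeg Q)" "dval y = int (pdeg v) - int (pdeg Q)"
    using dval_eq Ru Rv x(2) y(2) by blast+
  then have "pdeg u \<noteq> pdeg v"
    using \<open>dval x \<noteq> dval y\<close> by auto
  note d = pdeg_diff[OF uv(3,1) uv(4,2) this]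
  have "(x \<ominus> y) \<otimes> \<phi> Q = \<phi> (\<lambda>i. u i - v i)"
    using x y uvQ phi_closed by (simp add: l_diff_distr phi_diff)
  then have R: "represents (x \<ominus> y) (\<lambda>i. u i - v i) Q"
    unfolding represents_def using x y uvQ ore_poly_diff_closed[OF uvQ(1,2)] by auto
  then have "x \<ominus> y \<noteq> \<zero>"
    using represents_zero_iff d(1) by blast
  then have "dval (x \<ominus> y) = int (max (pdeg u) (pdeg v)) - int (pdeg Q)"
    using dval_eq[OF R] d(2) by simp
  then show ?thesis
    using vals by (auto simp: max_def)
qed

abbreviation \<iota> :: "'a \<Rightarrow> 'b" where "\<iota> a \<equiv> \<phi> (const_poly a)"

lemma iota_closed: "\<iota> a \<in> carrier D"
  using phi_closed ore_poly_closed by simp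

lemma iota_mult: "\<iota> (a * b) = \<iota> a \<otimes> \<iota> b"
proof -
  have "const_poly a \<otimes>\<^bsub>P\<^esub> const_poly b = const_poly (a * b)"
    using ore_poly_const_mult[OF ore_poly_closed(4)] by (auto simp: const_poly_def)
  then have "\<iota> (a * b) = \<phi> (const_poly a \<otimes>\<^bsub>P\<^esub> const_poly b)"
    by simp
  also have "\<dots> = \<iota> a \<otimes> \<iota> b"
    by (rule phi_mult[OF ore_poly_const_closed ore_poly_const_closed])
  finally show ?thesis .
qed

lemma iota_diff: "\<iota> (a - b) = \<iota> a \<ominus> \<iota> b"
proof -
  have "const_poly (a - b) = (\<lambda>i. const_poly a i - const_poly b i)"
    by (auto simp: const_poly_def)
  then show ?thesis
    using phi_diff[OF ore_poly_const_closed ore_poly_const_closed] by simp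
qed

lemma iota_one: "\<iota> 1 = \<one>"
  using ring_hom_one[OF phi_hom] by (simp add: ore_poly_def const_poly_def)

lemma iota_eq_zero_iff: "\<iota> a = \<zero> \<longleftrightarrow> a = 0"
  using phi_eq_zero_iff[OF ore_poly_const_closed] by (auto simp: const_poly_def fun_eq_iff)

lemma dval_iota: "a \<noteq> 0 \<Longrightarrow> dval (\<iota> a) = 0"
proof -
  assume "a \<noteq> 0"
  have "represents (\<iota> a) (const_poly a) (const_poly 1)"
    using iota_closed ore_poly_closed iota_one by (auto simp: represents_def const_poly_def fun_eq_iff)
  moreover have "pdeg (const_poly c) = 0" if "c \<noteq> 0" for c :: 'a
    using that by (intro pdeg_eqI) (auto simp: const_poly_def intro: finite_subset[of _ "{0}"])
  ultimately show ?thesis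
    using dval_eq \<open>a \<noteq> 0\<close> iota_eq_zero_iff by simp
qed

lemma valued: "valued_algebra D dval (\<lambda>a x. \<iota> a \<otimes> x)"
proof -
  have nonzero_mult: "x \<otimes> y \<noteq> \<zero>" if "x \<in> carrier D" "y \<in> carrier D" "x \<noteq> \<zero>" "y \<noteq> \<zero>" for x y
    using that nonzero_Units mult_eq_zero_Units by blast
  interpret ultrametric_group D dval
    by unfold_locales (rule dval_diff)
  have "valued_structure D dval"
    by unfold_locales (simp_all add: r_minus minus_eq r_distr one_not_zero nonzero_mult dval_mult)
  moreover have "scalar_action D dval (\<lambda>a x. \<iota> a \<otimes> x)"
  proof unfold_locales
    fix x a b assume x: "x \<in> carrier D"
    show "\<iota> a \<otimes> x \<ominus> \<iota> b \<otimes> x = \<iota> (a - b) \<otimes> x"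
      using x iota_closed by (simp add: iota_diff l_diff_distr)
    show "\<exists>c. \<iota> a \<otimes> (\<iota> b \<otimes> x) = \<iota> c \<otimes> x"
      using x iota_closed by (metis iota_mult m_assoc)
    show "\<iota> (inverse a) \<otimes> (\<iota> a \<otimes> x) = x" if "a \<noteq> 0"
      using x iota_closed that by (simp add: m_assoc[symmetric] iota_mult[symmetric] iota_one)
    show "dval (\<iota> a \<otimes> x) = dval x" if "x \<noteq> \<zero>" "a \<noteq> 0"
      using x that iota_closed by (simp add: dval_mult iota_eq_zero_iff dval_iota)
  qed (simp_all add: iota_closed r_distr)
  ultimately show ?thesis
    by (simp add: valued_algebra_def)
qed

lemma represents_diff_iota:
  assumes "represents x p q"
  shows "represents (x \<ominus> \<iota> c) (\<lambda>i. p i - c * q i) q"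
proof -
  have pq: "x \<in> carrier D" "p \<in> carrier P" "q \<in> carrier P" "q \<noteq> (\<lambda>i. 0)" "x \<otimes> \<phi> q = \<phi> p"
    using assms unfolding represents_def by auto
  have "(x \<ominus> \<iota> c) \<otimes> \<phi> q = \<phi> p \<ominus> \<phi> (const_poly c \<otimes>\<^bsub>P\<^esub> q)"
    using pq iota_closed phi_closed ore_poly_closed by (simp add: l_diff_distr phi_mult)
  also have "\<dots> = \<phi> (\<lambda>i. p i - c * q i)"
    using pq ore_poly_closed by (simp add: ore_poly_const_mult phi_diff)
  finally show ?thesis
    unfolding represents_def using pq iota_closed ore_poly_closed by auto
qed

text \<open>An element of value 0 minus the quotient of the leading coefficients of numerator and
  denominator has negative value.\<close>

lemma nonzero_value:
  assumes x: "x \<in> carrier D" "x \<notin> range \<iota>"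
  shows "\<exists>y\<in>gen_subfield D \<iota> x. y \<noteq> \<zero> \<and> dval y \<noteq> 0"
proof -
  have "x \<noteq> \<zero>"
    using x(2) iota_eq_zero_iff by (metis rangeI)
  show ?thesis
  proof (cases "dval x = 0")
    case False
    then show ?thesis
      using \<open>x \<noteq> \<zero>\<close> gen_subfield.gen[of x D \<iota>] by blast
  next
    case True
    obtain p q where R: "represents x p q"
      using represents_exists[OF x(1)] by blast
    then have "p \<noteq> (\<lambda>i. 0)" and fin: "finite {i. p i \<noteq> 0}" "finite {i. q i \<noteq> 0}" "q \<noteq> (\<lambda>i. 0)"
      using represents_zero_iff[OF R] \<open>x \<noteq> \<zero>\<close> unfolding represents_def by (auto simp: ore_poly_carrier)
    have "pdeg p = pdeg q"
      using dval_eq[OF R \<open>x \<noteq> \<zero>\<close>] True by simp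
    then have dp: "\<And>i. pdeg q < i \<Longrightarrow> p i = 0"
      using pdeg(2)[OF fin(1) \<open>p \<noteq> (\<lambda>i. 0)\<close>] by simp
    have dq: "q (pdeg q) \<noteq> 0" "\<And>i. pdeg q < i \<Longrightarrow> q i = 0"
      using pdeg[OF fin(2,3)] by simp_all
    define c where "c = p (pdeg q) * inverse (q (pdeg q))"
    define r where "r = (\<lambda>i. p i - c * q i)"
    define y where "y = x \<ominus> \<iota> c"
    have Ry: "represents y r q"
      unfolding y_def r_def using R by (rule represents_diff_iota)
    have "y \<in> gen_subfield D \<iota> x"
      unfolding y_def a_minus_def by (intro gen_subfield.add gen_subfield.neg gen_subfield.gen gen_subfield.base)
    moreover have "y \<noteq> \<zero>"
      using x iota_closed unfolding y_def by (metis minus_eq_zero_iff rangeI)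
    moreover have "pdeg r < pdeg q"
    proof -
      have "r \<noteq> (\<lambda>i. 0)" "finite {i. r i \<noteq> 0}"
        using represents_zero_iff[OF Ry] \<open>y \<noteq> \<zero>\<close> Ry by (auto simp: represents_def ore_poly_carrier)
      moreover have "r i = 0" if "pdeg q \<le> i" for i
        using that dp dq by (cases "i = pdeg q") (auto simp: r_def c_def mult.assoc)
      ultimately show ?thesis
        using pdeg(1)[of r] not_less by blast
    qed
    then have "dval y \<noteq> 0"
      using dval_eq[OF Ry \<open>y \<noteq> \<zero>\<close>] by simp
    ultimately show ?thesis
      by blast
  qed
qed

theorem regular_ext_fraction_field: "regular_ext D \<iota>"
proof -
  interpret valued_algebra D dval "\<lambda>a x. \<iota> a \<otimes> x"
    by (rule valued)
  show ?thesis
    by (rule regular_extI)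
      (auto simp: iota_closed algebraic_over_def fin_dim_left_iff_span intro: nonzero_value)
qed

end

theorem proposition2:
  fixes \<sigma> \<delta> :: "'a::division_ring \<Rightarrow> 'a"
  assumes "ring_automorphism \<sigma>"
    and "sigma_derivation \<sigma> \<delta>"
  shows "regular_ext (skew_series_t \<sigma>) const_series
    \<and> regular_ext (skew_series_z \<sigma> \<delta>) const_series
    \<and> (\<forall>(D :: 'b ring) \<phi>. is_skew_fraction_field \<sigma> \<delta> D \<phi> \<longrightarrow> regular_ext D (\<phi> \<circ> const_poly))"
proof (intro conjI allI impI)
  show "regular_ext (skew_series_t \<sigma>) const_series"
    using assms(1) by (rule regular_ext_skew_series_t)
  show "regular_ext (skew_series_z \<sigma> \<delta>) const_series"
    using assms by (rule regular_ext_skew_series_z)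
  fix D :: "'b ring" and \<phi>
  assume "is_skew_fraction_field \<sigma> \<delta> D \<phi>"
  then interpret skew_fraction_field \<sigma> \<delta> D \<phi>
    using assms by unfold_locales
  show "regular_ext D (\<phi> \<circ> const_poly)"
    using regular_ext_fraction_field by (simp add: comp_def)
qed

end
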